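(* Let $\gamma\in\mathcal{M}_k\otimes\mathcal{M}_m$ be a state. Then $\gamma\in CR_{k,m}$ if and only if for every pair of orthogonal projections $W\in\mathcal{M}_k$, $V\in\mathcal{M}_m$ the following two conditions are equivalent: (a) $\mathrm{tr}(\gamma(W\otimes V^\perp))=\mathrm{tr}(\gamma(W^\perp\otimes V))=0$; (b) $\gamma=(W\otimes V)\gamma(W\otimes V)+(W^\perp\otimes V^\perp)\gamma(W^\perp\otimes V^\perp)$.
   Context: $\mathcal{M}_k$ denotes the complex $k\times k$ matrices, and $\mathcal{M}_k\otimes\mathcal{M}_m$ is identified with $\mathcal{M}_{km}$ via the Kronecker product. A state is a positive semidefinite Hermitian matrix (not necessarily of trace one). For an orthogonal projection $W$, $W^\perp=\mathrm{Id}-W$; for orthogonal projections $V,W$, $V\mathcal{M}_kW=\{VXW:X\in\mathcal{M}_k\}$. For $\gamma=\sum_{i=1}^nA_i\otimes B_i\in\mathcal{M}_k\otimes\mathcal{M}_m$ define $G_\gamma:\mathcal{M}_k\to\mathcal{M}_m$, $G_\gamma(X)=\sum_i\mathrm{tr}(A_iX)B_i$, and $F_\gamma:\mathcal{M}_m\to\mathcal{M}_k$, $F_\gamma(Y)=\sum_i\mathrm{tr}(B_iY)A_i$. A linear map is positive if it maps positive semidefinite matrices to positive semidefinite matrices, and self-adjoint if self-adjoint with respect to $\langle X,Y\rangle=\mathrm{tr}(XY^* )$. Given an orthogonal projection $V\in\mathcal{M}_k$ and a positive map $T:V\mathcal{M}_kV\to V\mathcal{M}_kV$, $T$ is irreducible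 if the only orthogonal projections $W$ with $W\mathcal{M}_kW\subseteq V\mathcal{M}_kV$ and $T(W\mathcal{M}_kW)\subseteq W\mathcal{M}_kW$ are $W=0$ and $W=V$. A self-adjoint positive map $T:\mathcal{M}_k\to\mathcal{M}_k$ is completely reducible if there are orthogonal projections $W_1,\dots,W_l$ with $W_iW_j=0$ for $i\ne j$, $T(W_i\mathcal{M}_kW_i)\subseteq W_i\mathcal{M}_kW_i$ and $T|_{W_i\mathcal{M}_kW_i}$ irreducible for every $i$, and $T|_R\equiv0$, where $R$ is the orthogonal complement (trace inner product) of $\bigoplus_iW_i\mathcal{M}_kW_i$ in $\mathcal{M}_k$. $CR_{k,m}$ is the set of states $\gamma\in\mathcal{M}_k\otimes\mathcal{M}_m$ such that $F_\gamma\circ G_\gamma:\mathcal{M}_k\to\mathcal{M}_k$ is completely reducible (completely reducible states). *)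

theory Defs
  imports "HOL-Analysis.Analysis"
begin

text \<open>Square complex matrices indexed by a finite type 'n (so M_k with k = CARD('n)).
  The Kronecker product of M_k and M_m is indexed by the product type 'k \<times> 'm.\<close>

type_synonym 'n cmat = "complex^'n^'n"

definition cadj :: "'n::finite cmat \<Rightarrow> 'n cmat" where
  "cadj A = (\<chi> i j. cnj (A $ j $ i))"

definition hermitian :: "'n::finite cmat \<Rightarrow> bool" where
  "hermitian A \<longleftrightarrow> cadj A = A"

definition psd :: "'n::finite cmat \<Rightarrow> bool" where
  "psd A \<longleftrightarrow> hermitian A \<and>
     (\<forall>x::complex^'n. let q = (\<Sum>i\<in>UNIV. \<Sum>j\<in>UNIV. cnj (x $ i) * A $ i $ j * x $ j)
        in Im q = 0 \<and> Re q \<ge> 0)"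

text \<open>A state is a positive semidefinite Hermitian matrix (trace not normalised).\<close>
definition is_state :: "'n::finite cmat \<Rightarrow> bool" where
  "is_state A \<longleftrightarrow> psd A"

definition orth_proj :: "'n::finite cmat \<Rightarrow> bool" where
  "orth_proj P \<longleftrightarrow> P ** P = P \<and> cadj P = P"

definition perp :: "'n::finite cmat \<Rightarrow> 'n cmat" where
  "perp W = mat 1 - W"

definition kron :: "'k::finite cmat \<Rightarrow> 'm::finite cmat \<Rightarrow> ('k \<times> 'm) cmat" where
  "kron A B = (\<chi> p q. A $ fst p $ fst q * B $ snd p $ snd q)"

definition tinner :: "'n::finite cmat \<Rightarrow> 'n cmat \<Rightarrow> complex" where
  "tinner X Y = trace (X ** cadj Y)"

definition corner :: "'n::finite cmat \<Rightarrow> 'n cmat \<Rightarrow> 'n cmat set" where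
  "corner V W = {V ** X ** W | X. True}"

text \<open>For gamma = sum_i A_i (x) B_i one has
  G_gamma(X) = sum_i tr(A_i X) B_i, whose (j,j') entry is
  sum_{a,a'} gamma_{(a,j),(a',j')} X_{a',a}; similarly for F_gamma.
  These coordinate formulas are independent of the decomposition.\<close>
definition G_map :: "('k::finite \<times> 'm::finite) cmat \<Rightarrow> 'k cmat \<Rightarrow> 'm cmat" where
  "G_map \<gamma> X = (\<chi> j j'. \<Sum>a\<in>UNIV. \<Sum>a'\<in>UNIV. \<gamma> $ (a, j) $ (a', j') * X $ a' $ a)"

definition F_map :: "('k::finite \<times> 'm::finite) cmat \<Rightarrow> 'm cmat \<Rightarrow> 'k cmat" where
  "F_map \<gamma> Y = (\<chi> i i'. \<Sum>b\<in>UNIV. \<Sum>b'\<in>UNIV. \<gamma> $ (i, b) $ (i', b') * Y $ b' $ b)"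

definition positive_map :: "('n::finite cmat \<Rightarrow> 'p::finite cmat) \<Rightarrow> bool" where
  "positive_map T \<longleftrightarrow> (\<forall>X. psd X \<longrightarrow> psd (T X))"

definition selfadjoint_map :: "('n::finite cmat \<Rightarrow> 'n cmat) \<Rightarrow> bool" where
  "selfadjoint_map T \<longleftrightarrow> (\<forall>X Y. tinner (T X) Y = tinner X (T Y))"

definition invariant_corner :: "('n::finite cmat \<Rightarrow> 'n cmat) \<Rightarrow> 'n cmat \<Rightarrow> bool" where
  "invariant_corner T V \<longleftrightarrow> T ` corner V V \<subseteq> corner V V"

definition irreducible_on :: "('n::finite cmat \<Rightarrow> 'n cmat) \<Rightarrow> 'n cmat \<Rightarrow> bool" where
  "irreducible_on T V \<longleftrightarrow>
     (\<forall>W. orth_proj W \<and> corner W W \<subseteq> corner V V \<and> T ` corner W W \<subseteq> corner W W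
          \<longrightarrow> W = 0 \<or> W = V)"

definition completely_reducible :: "('n::finite cmat \<Rightarrow> 'n cmat) \<Rightarrow> bool" where
  "completely_reducible T \<longleftrightarrow>
     selfadjoint_map T \<and> positive_map T \<and>
     (\<exists>Ws :: 'n cmat list.
        (\<forall>i<length Ws. orth_proj (Ws ! i)) \<and>
        (\<forall>i<length Ws. \<forall>j<length Ws. i \<noteq> j \<longrightarrow> Ws ! i ** Ws ! j = 0) \<and>
        (\<forall>i<length Ws. invariant_corner T (Ws ! i) \<and> irreducible_on T (Ws ! i)) \<and>
        (\<forall>X. (\<forall>i<length Ws. \<forall>Y\<in>corner (Ws ! i) (Ws ! i). tinner X Y = 0)
             \<longrightarrow> T X = 0))"

definition CR :: "('k::finite \<times> 'm::finite) cmat set" where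
  "CR = {\<gamma>. is_state \<gamma> \<and> completely_reducible (F_map \<gamma> \<circ> G_map \<gamma>)}"

end

theory Submission
  imports Defs
begin

text \<open>
  G and F are mutually adjoint for the trace inner product, so T = F \<circ> G is positive and
  self-adjoint, and T X = 0 forces G X = 0. For a state, condition (a) says that \<gamma> is
  annihilated by W \<otimes> perp V and perp W \<otimes> V. Then G maps the corner W M W into V M V and
  F maps V M V back into W M W, so the corners of W and perp W are T-invariant; and (b)
  holds exactly when, in addition, G kills the off-diagonal corners W M (perp W) and
  (perp W) M W. Conversely, if the corner of W is T-invariant, (a) holds for V the range
  projection of G W.

  If T is completely reducible, each irreducible block lies under W, or under perp W, or is
  killed by T, because its meet with W spans an invariant sub-corner. Hence T, and with it
  G, vanishes on the off-diagonal corners, which gives (a) \<Longrightarrow> (b). If (a) and (b) are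
  equivalent for all W and V, then the complement of every invariant corner is invariant and
  T kills the off-diagonal corners; splitting invariant corners until they are irreducible
  yields the complete reduction.
\<close>

lemma cadj_cadj [simp]: "cadj (cadj A) = A"
  by (simp add: cadj_def vec_eq_iff)

lemma cadj_mult: "cadj (A ** B) = cadj B ** cadj A"
  by (simp add: cadj_def matrix_matrix_mult_def vec_eq_iff mult.commute)

lemma cadj_diff: "cadj (A - B) = cadj A - cadj B"
  by (simp add: cadj_def vec_eq_iff)

lemma cadj_mat1 [simp]: "cadj (mat 1) = mat 1"
  by (simp add: cadj_def mat_def vec_eq_iff)

lemma cadj_zero [simp]: "cadj 0 = 0"
  by (simp add: cadj_def vec_eq_iff)

lemma cadj_kron: "cadj (kron A B) = kron (cadj A) (cadj B)"
  by (simp add: cadj_def kron_def vec_eq_iff)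

lemma hermitian_entry: "hermitian A \<Longrightarrow> cnj (A $ i $ j) = A $ j $ i"
  unfolding hermitian_def cadj_def by (metis vec_lambda_beta)

lemma hermitian_mult_eq_0_commute:
  assumes "hermitian A" "hermitian B" "A ** B = 0"
  shows "B ** A = 0"
  using assms by (metis cadj_mult cadj_zero hermitian_def)

lemma kron_mult: "kron A B ** kron C D = kron (A ** C) (B ** D)"
  unfolding kron_def matrix_matrix_mult_def
  by (simp add: vec_eq_iff sum_product UNIV_Times_UNIV[symmetric] sum.cartesian_product mult_ac
      case_prod_beta del: UNIV_Times_UNIV)

lemma kron_mat1 [simp]: "kron (mat 1) (mat 1) = mat 1"
  by (auto simp add: kron_def mat_def vec_eq_iff prod_eq_iff)

lemma kron_add_left: "kron (A + B) C = kron A C + kron B C"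
  by (simp add: kron_def vec_eq_iff distrib_right)

lemma kron_add_right: "kron A (B + C) = kron A B + kron A C"
  by (simp add: kron_def vec_eq_iff distrib_left)

lemma kron_zero_left [simp]: "kron 0 B = 0"
  and kron_zero_right [simp]: "kron A 0 = 0"
  by (simp_all add: kron_def vec_eq_iff)

lemma matrix_diff_ldistrib: "(A::'a::ring_1^'n^'m) ** (B - C) = A ** B - A ** C"
  by (simp add: matrix_matrix_mult_def vec_eq_iff sum_subtractf right_diff_distrib)

lemma matrix_diff_rdistrib: "((A::'a::ring_1^'n^'m) - B) ** C = A ** C - B ** C"
  by (simp add: matrix_matrix_mult_def vec_eq_iff sum_subtractf left_diff_distrib)

lemma matrix_add_rdistrib: "((A::'a::semiring_1^'n^'m) + B) ** C = A ** C + B ** C"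
  by (simp add: matrix_matrix_mult_def vec_eq_iff sum.distrib distrib_right)

lemma matrix_sum_rdistrib:
  "finite I \<Longrightarrow> (\<Sum>i\<in>I. (A i::'a::semiring_1^'n^'m)) ** C = (\<Sum>i\<in>I. A i ** C)"
  by (induct I rule: finite_induct) (auto simp: matrix_add_rdistrib)

lemma matrix_sum_ldistrib:
  "finite I \<Longrightarrow> C ** (\<Sum>i\<in>I. (A i::'a::semiring_1^'n^'m)) = (\<Sum>i\<in>I. C ** A i)"
  by (induct I rule: finite_induct) (auto simp: matrix_add_ldistrib)

lemma trace_zero [simp]: "trace (0::complex^'n^'n) = 0"
  by (simp add: trace_def)

lemma trace_sum:
  "finite I \<Longrightarrow> trace (\<Sum>i\<in>I. (A i :: complex^'n^'n)) = (\<Sum>i\<in>I. trace (A i))"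
  by (induct I rule: finite_induct) (auto simp: trace_add)

lemma trace_mult_cycle: "trace ((A::complex^'n^'n) ** B ** C) = trace (B ** C ** A)"
  by (metis matrix_mul_assoc trace_mul_sym)

lemma sum_UNIV_prod:
  "(\<Sum>p\<in>(UNIV::('a::finite \<times> 'b::finite) set). f p) = (\<Sum>a\<in>UNIV. \<Sum>b\<in>UNIV. f (a, b))"
  by (simp add: sum.cartesian_product case_prod_beta' flip: UNIV_Times_UNIV)

lemma orth_proj_idem: "orth_proj P \<Longrightarrow> P ** P = P"
  and orth_proj_cadj: "orth_proj P \<Longrightarrow> cadj P = P"
  by (auto simp: orth_proj_def)

lemma orth_proj_hermitian: "orth_proj P \<Longrightarrow> hermitian P"
  by (simp add: orth_proj_def hermitian_def)

lemma orth_proj_1 [simp]: "orth_proj (mat 1)"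
  by (simp add: orth_proj_def)

lemma perp_perp [simp]: "perp (perp W) = W"
  by (simp add: perp_def)

lemma add_perp: "P + perp P = mat 1"
  by (simp add: perp_def)

lemma orth_proj_perp: "orth_proj P \<Longrightarrow> orth_proj (perp P)"
  by (simp add: orth_proj_def perp_def matrix_diff_ldistrib matrix_diff_rdistrib cadj_diff)

lemma orth_proj_mult_perp: "orth_proj P \<Longrightarrow> P ** perp P = 0"
  by (simp add: orth_proj_def perp_def matrix_diff_ldistrib)

lemma perp_mult_orth_proj: "orth_proj P \<Longrightarrow> perp P ** P = 0"
  by (simp add: orth_proj_def perp_def matrix_diff_rdistrib)

lemma mult_perp_eq_0_iff: "A ** perp P = 0 \<longleftrightarrow> A ** P = A"
  by (auto simp: perp_def matrix_diff_ldistrib)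

lemma perp_mult_eq_0_iff: "perp P ** A = 0 \<longleftrightarrow> P ** A = A"
  by (auto simp: perp_def matrix_diff_rdistrib)

lemma orth_proj_kron: "orth_proj A \<Longrightarrow> orth_proj B \<Longrightarrow> orth_proj (kron A B)"
  by (simp add: orth_proj_def kron_mult cadj_kron)

lemma hermitian_absorb_commute:
  assumes "hermitian P" "hermitian Q" "P ** Q = Q"
  shows "Q ** P = Q"
  using assms by (metis cadj_mult hermitian_def)

lemma orth_proj_absorb_commute: "orth_proj P \<Longrightarrow> orth_proj Q \<Longrightarrow> P ** Q = Q \<Longrightarrow> Q ** P = Q"
  by (simp add: hermitian_absorb_commute orth_proj_hermitian)

lemma orth_proj_absorb_sandwich: "orth_proj P \<Longrightarrow> A = P ** A ** P \<Longrightarrow> P ** A = A"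
  by (metis matrix_mul_assoc orth_proj_idem)

lemma hermitian_eq_sandwich:
  assumes "hermitian A" "orth_proj P" "A ** perp P = 0"
  shows "A = P ** A ** P"
proof -
  have "perp P ** A = 0"
    using hermitian_mult_eq_0_commute[OF assms(1) orth_proj_hermitian[OF orth_proj_perp]] assms
    by blast
  then show ?thesis
    using assms(3) by (metis mult_perp_eq_0_iff perp_mult_eq_0_iff matrix_mul_assoc)
qed

lemma corner_iff:
  assumes "orth_proj P"
  shows "Z \<in> corner P P \<longleftrightarrow> Z = P ** Z ** P"
proof
  assume "Z \<in> corner P P"
  then obtain X where "Z = P ** X ** P"
    unfolding corner_def by blast
  then show "Z = P ** Z ** P"
    using orth_proj_idem[OF assms] by (metis matrix_mul_assoc)
qed (auto simp: corner_def)

lemma invariant_corner_iff: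
  assumes "orth_proj P"
  shows "invariant_corner T P \<longleftrightarrow> (\<forall>Z. T (P ** Z ** P) = P ** T (P ** Z ** P) ** P)"
  unfolding invariant_corner_def corner_iff[OF assms, symmetric]
  by (auto simp: corner_def)

lemma invariant_cornerD:
  "orth_proj P \<Longrightarrow> invariant_corner T P \<Longrightarrow> T (P ** Z ** P) = P ** T (P ** Z ** P) ** P"
  by (simp add: invariant_corner_iff)

lemma invariant_corner_proj:
  assumes "orth_proj P" "invariant_corner T P"
  shows "T P = P ** T P ** P"
  using invariant_cornerD[OF assms, of "mat 1"] orth_proj_idem[OF assms(1)] by simp

definition cinner :: "complex^'n::finite \<Rightarrow> complex^'n \<Rightarrow> complex" where
  "cinner x y = (\<Sum>i\<in>UNIV. cnj (x $ i) * y $ i)"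

definition outer :: "complex^'n::finite \<Rightarrow> complex^'n \<Rightarrow> 'n cmat" where
  "outer u v = (\<chi> i j. u $ i * cnj (v $ j))"

definition qf :: "'n::finite cmat \<Rightarrow> complex^'n \<Rightarrow> complex" where
  "qf A x = cinner x (A *v x)"

lemma cinner_add_left: "cinner (x + y) z = cinner x z + cinner y z"
  by (simp add: cinner_def sum.distrib distrib_right)

lemma cinner_add_right: "cinner z (x + y) = cinner z x + cinner z y"
  by (simp add: cinner_def sum.distrib distrib_left)

lemma cinner_diff_left: "cinner (x - y) z = cinner x z - cinner y z"
  by (simp add: cinner_def sum_subtractf left_diff_distrib)

lemma cinner_diff_right: "cinner z (x - y) = cinner z x - cinner z y"
  by (simp add: cinner_def sum_subtractf right_diff_distrib)

lemma cinner_scale_left: "cinner (c *s x) y = cnj c * cinner x y"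
  by (simp add: cinner_def sum_distrib_left mult_ac)

lemma cinner_scale_right: "cinner x (c *s y) = c * cinner x y"
  by (simp add: cinner_def sum_distrib_left mult_ac)

lemma cinner_zero_left [simp]: "cinner 0 y = 0"
  and cinner_zero_right [simp]: "cinner x 0 = 0"
  by (simp_all add: cinner_def)

lemma matrix_vector_mult_scale: "A *v (c *s x) = c *s (A *v (x::complex^'n))"
  by (simp add: matrix_vector_mult_def vec_eq_iff sum_distrib_left mult_ac)

lemma cinner_cadj: "cinner x (A *v y) = cinner (cadj A *v x) y"
proof -
  have "cinner x (A *v y) = (\<Sum>i\<in>UNIV. \<Sum>j\<in>UNIV. cnj (x $ i) * A $ i $ j * y $ j)"
    by (simp add: cinner_def matrix_vector_mult_def sum_distrib_left mult_ac)
  also have "\<dots> = (\<Sum>j\<in>UNIV. \<Sum>i\<in>UNIV. cnj (x $ i) * A $ i $ j * y $ j)"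
    by (rule sum.swap)
  also have "\<dots> = cinner (cadj A *v x) y"
    by (simp add: cinner_def cadj_def matrix_vector_mult_def sum_distrib_right sum_distrib_left mult_ac)
  finally show ?thesis .
qed

lemma cinner_hermitian: "hermitian A \<Longrightarrow> cinner x (A *v y) = cinner (A *v x) y"
  by (simp add: cinner_cadj hermitian_def)

lemma cinner_self: "cinner x x = (\<Sum>i\<in>UNIV. complex_of_real ((cmod (x $ i))\<^sup>2))"
  unfolding cinner_def
  by (intro sum.cong refl) (metis complex_norm_square mult.commute of_real_power)

lemma cinner_self_Im [simp]: "Im (cinner x x) = 0"
  by (simp add: cinner_self Im_sum)

lemma cinner_self_Re: "Re (cinner x x) = (\<Sum>i\<in>UNIV. (cmod (x $ i))\<^sup>2)"
  by (simp add: cinner_self Re_sum)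

lemma cinner_self_nonneg: "0 \<le> Re (cinner x x)"
  by (simp add: cinner_self_Re sum_nonneg)

lemma cinner_self_real: "cinner x x = complex_of_real (Re (cinner x x))"
  by (simp add: complex_eq_iff)

lemma cinner_self_eq_0 [simp]: "cinner x x = 0 \<longleftrightarrow> x = 0"
proof
  assume "cinner x x = 0"
  then have "(\<Sum>i\<in>UNIV. (cmod (x $ i))\<^sup>2) = 0"
    by (metis cinner_self_Re zero_complex.sel(1))
  then show "x = 0"
    by (simp add: vec_eq_iff sum_nonneg_eq_0_iff)
qed simp

lemma tinner_self_eq_0: "tinner Z Z = 0 \<Longrightarrow> (Z::'n::finite cmat) = 0"
proof -
  assume "tinner Z Z = 0"
  moreover have "tinner Z Z = (\<Sum>i\<in>UNIV. cinner (Z $ i) (Z $ i))"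
    by (simp add: tinner_def trace_def matrix_matrix_mult_def cadj_def cinner_def mult.commute)
  ultimately have "(\<Sum>i\<in>UNIV. Re (cinner (Z $ i) (Z $ i))) = 0"
    by (metis Re_sum zero_complex.sel(1))
  then have "Re (cinner (Z $ i) (Z $ i)) = 0" for i
    by (simp add: sum_nonneg_eq_0_iff cinner_self_nonneg)
  then have "cinner (Z $ i) (Z $ i) = 0" for i
    by (simp only: complex_eq_iff cinner_self_Im) simp
  then show "Z = 0"
    by (simp add: vec_eq_iff)
qed

lemma zero_if_trace_mult_zero: "(\<And>Y. trace (A ** Y) = 0) \<Longrightarrow> (A::'n::finite cmat) = 0"
  by (rule tinner_self_eq_0) (simp add: tinner_def)

subsection \<open>Positive semidefinite matrices\<close>

lemma psd_iff_qf: "psd A \<longleftrightarrow> hermitian A \<and> (\<forall>x. Im (qf A x) = 0 \<and> 0 \<le> Re (qf A x))"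
proof -
  have "(\<Sum>i\<in>UNIV. \<Sum>j\<in>UNIV. cnj (x $ i) * A $ i $ j * x $ j) = qf A x" for x
    by (simp add: qf_def cinner_def matrix_vector_mult_def sum_distrib_left mult_ac)
  then show ?thesis
    by (simp add: psd_def Let_def)
qed

lemma psd_hermitian: "psd A \<Longrightarrow> hermitian A"
  and psd_cadj: "psd A \<Longrightarrow> cadj A = A"
  and psd_qf_Im: "psd A \<Longrightarrow> Im (qf A x) = 0"
  and psd_qf_nonneg: "psd A \<Longrightarrow> 0 \<le> Re (qf A x)"
  by (simp_all add: psd_iff_qf hermitian_def)

lemma psd_qf_eq_0_iff: "psd A \<Longrightarrow> qf A x = 0 \<longleftrightarrow> Re (qf A x) = 0"
  by (simp add: complex_eq_iff psd_qf_Im)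

lemma qf_add_scale: "qf A (x + c *s y) =
    qf A x + c * cinner x (A *v y) + cnj c * cinner y (A *v x) + cnj c * c * qf A y"
  by (simp add: qf_def matrix_vector_right_distrib matrix_vector_mult_scale cinner_add_left
      cinner_add_right cinner_scale_left cinner_scale_right algebra_simps)

lemma qf_add_matrix: "qf (A + B) x = qf A x + qf B x"
  by (simp add: qf_def matrix_vector_mult_add_rdistrib cinner_add_right)

lemma qf_diff_matrix: "qf (A - B) x = qf A x - qf B x"
  by (simp add: qf_def matrix_vector_mult_diff_rdistrib cinner_diff_right)

lemma qf_zero_matrix [simp]: "qf 0 x = 0"
  by (simp add: qf_def)

lemma qf_sum_matrix: "finite I \<Longrightarrow> qf (\<Sum>i\<in>I. A i) x = (\<Sum>i\<in>I. qf (A i) x)"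
  by (induct I rule: finite_induct) (simp_all add: qf_add_matrix)

text \<open>Minimising the quadratic form along the line through x in direction A x.\<close>

lemma psd_kernel:
  assumes A: "psd A" and q: "qf A x = 0"
  shows "A *v x = 0"
proof -
  let ?y = "A *v x"
  define N where "N = Re (cinner ?y ?y)"
  define d where "d = Re (qf A ?y)"
  define t where "t = N / (d + 1)"
  have d0: "d \<ge> 0"
    unfolding d_def using psd_qf_nonneg[OF A] .
  have c2: "cinner ?y (A *v x) = of_real N"
    unfolding N_def by (rule cinner_self_real)
  have c1: "cinner x (A *v ?y) = of_real N"
    using cinner_hermitian[OF psd_hermitian[OF A], of x ?y] c2 by simp
  have dq: "qf A ?y = of_real d"
    unfolding d_def using psd_qf_Im[OF A] by (simp add: complex_eq_iff)
  have "qf A (x + (- of_real t) *s ?y) = of_real (- 2 * t * N + t * t * d)"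
    unfolding qf_add_scale by (simp add: q c1 c2 dq)
  then have "0 \<le> - 2 * t * N + t * t * d"
    using psd_qf_nonneg[OF A, of "x + (- of_real t) *s ?y"] by simp
  moreover have "- 2 * t * N + t * t * d < 0" if Np: "N > 0"
  proof -
    have tp: "t > 0"
      using Np d0 by (simp add: t_def)
    have "t * d < N"
      using Np d0 unfolding t_def by (simp add: field_simps)
    then have "t * (t * d) < t * (2 * N)"
      using tp Np by (intro mult_strict_left_mono) auto
    then show ?thesis
      by (simp add: algebra_simps)
  qed
  ultimately have "N = 0"
    using cinner_self_nonneg[of ?y] unfolding N_def by linarith
  then show ?thesis
    using c2 by simp
qed

lemma psd_kernel_mono:
  assumes "psd B" "psd (A - B)" "A *v x = 0"
  shows "B *v x = 0"
proof -
  have "qf A x = 0"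
    by (simp add: qf_def assms(3))
  then have "Re (qf B x) \<le> 0"
    using psd_qf_nonneg[OF assms(2), of x] by (simp add: qf_diff_matrix)
  then have "qf B x = 0"
    using psd_qf_nonneg[OF assms(1), of x] psd_qf_eq_0_iff[OF assms(1)] by simp
  then show ?thesis
    by (rule psd_kernel[OF assms(1)])
qed

lemma psd_congruence:
  assumes A: "psd A"
  shows "psd (cadj B ** A ** B)"
proof -
  have "hermitian (cadj B ** A ** B)"
    using psd_cadj[OF A] by (simp add: hermitian_def cadj_mult matrix_mul_assoc)
  moreover have "qf (cadj B ** A ** B) x = qf A (B *v x)" for x
    unfolding qf_def by (simp add: cinner_cadj flip: matrix_vector_mul_assoc)
  ultimately show ?thesis
    unfolding psd_iff_qf using psd_qf_Im[OF A] psd_qf_nonneg[OF A] by simp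
qed

lemma psd_sandwich: "psd A \<Longrightarrow> orth_proj P \<Longrightarrow> psd (P ** A ** P)"
  using psd_congruence[of A P] by (simp add: orth_proj_cadj)

lemma psd_mat1: "psd (mat 1)"
  by (simp add: psd_iff_qf hermitian_def qf_def cinner_self_nonneg)

lemma psd_orth_proj: "orth_proj P \<Longrightarrow> psd P"
  by (metis psd_sandwich[OF psd_mat1] matrix_mul_rid orth_proj_idem)

lemma psd_add: "psd A \<Longrightarrow> psd B \<Longrightarrow> psd (A + B)"
  by (simp add: psd_iff_qf qf_add_matrix hermitian_def cadj_def vec_eq_iff)

lemma psd_zero: "psd 0"
  by (simp add: psd_iff_qf hermitian_def)

lemma psd_sum: "finite I \<Longrightarrow> (\<And>i. i \<in> I \<Longrightarrow> psd (A i)) \<Longrightarrow> psd (\<Sum>i\<in>I. A i)"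
  by (induct I rule: finite_induct) (simp_all add: psd_zero psd_add)

lemma psd_mult_eq_0_mono:
  assumes "psd B" "psd (A - B)" "A ** C = 0"
  shows "B ** C = 0"
proof -
  have "A *v (C *v x) = 0" for x
    using assms(3) by (simp add: matrix_vector_mul_assoc)
  then have "B *v (C *v x) = 0" for x
    by (rule psd_kernel_mono[OF assms(1,2)])
  then show ?thesis
    by (simp add: matrix_eq matrix_vector_mul_assoc)
qed

subsection \<open>Decomposition of a positive semidefinite matrix into rank-one terms\<close>

lemma trace_outer_mult: "trace (outer v v ** B) = qf B v"
proof -
  have "trace (outer v v ** B) = (\<Sum>i\<in>UNIV. \<Sum>k\<in>UNIV. v $ i * (cnj (v $ k) * B $ k $ i))"
    by (simp add: trace_def outer_def matrix_matrix_mult_def mult_ac)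
  also have "\<dots> = (\<Sum>k\<in>UNIV. \<Sum>i\<in>UNIV. v $ i * (cnj (v $ k) * B $ k $ i))"
    by (rule sum.swap)
  also have "\<dots> = qf B v"
    by (simp add: qf_def cinner_def matrix_vector_mult_def sum_distrib_left mult_ac)
  finally show ?thesis .
qed

lemma mult_outer: "B ** outer u w = outer (B *v u) w"
  by (simp add: outer_def matrix_matrix_mult_def matrix_vector_mult_def vec_eq_iff
      sum_distrib_right sum_distrib_left mult_ac)

lemma outer_zero_left [simp]: "outer 0 w = 0"
  by (simp add: outer_def vec_eq_iff)

lemma qf_axis: "qf A (axis k 1) = A $ k $ k"
  by (simp add: qf_def cinner_def matrix_vector_mult_def axis_def if_distrib if_distribR cong: if_cong)

lemma psd_diag_eq_0:
  assumes A: "psd A" and z: "A $ k $ k = 0"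
  shows "A $ i $ k = 0" "A $ k $ i = 0"
proof -
  have "A *v axis k 1 = 0"
    using psd_kernel[OF A] qf_axis z by metis
  then have c: "A $ i $ k = 0" for i
    by (simp add: matrix_vector_mult_def axis_def vec_eq_iff if_distrib if_distribR cong: if_cong)
  then show "A $ i $ k = 0" .
  show "A $ k $ i = 0"
    using hermitian_entry[OF psd_hermitian[OF A], of i k] c[of i] by simp
qed

lemma psd_diag_real: "psd A \<Longrightarrow> A $ k $ k = complex_of_real (Re (A $ k $ k))"
  using psd_qf_Im[of A "axis k 1"] qf_axis by (metis complex_is_Real_iff Reals_cases Re_complex_of_real)

lemma psd_diag_nonneg: "psd A \<Longrightarrow> 0 \<le> Re (A $ k $ k)"
  using psd_qf_nonneg[of A "axis k 1"] qf_axis by metis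

lemma qf_minus_pivot_outer:
  assumes H: "hermitian A" and akk: "A $ k $ k = of_real a"
  shows "qf (A - (\<chi> i j. A $ i $ k * cnj (A $ j $ k) / of_real a)) x
    = qf A (x + (- (A *v x) $ k / of_real a) *s axis k 1)"
proof -
  define b where "b = (A *v x) $ k"
  have e1: "cinner x (A *v axis k 1) = cnj b"
    unfolding cinner_hermitian[OF H] b_def
    by (simp add: cinner_def axis_def if_distrib if_distribR cong: if_cong)
  have e2: "cinner (axis k 1) (A *v x) = b"
    by (simp add: b_def cinner_def axis_def if_distrib if_distribR cong: if_cong)
  have s1: "(\<Sum>i\<in>UNIV. cnj (x $ i) * A $ i $ k) = cnj b"
    unfolding b_def matrix_vector_mult_def using hermitian_entry[OF H] by (simp add: mult.commute)
  have s2: "(\<Sum>j\<in>UNIV. cnj (A $ j $ k) * x $ j) = b"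
    unfolding b_def matrix_vector_mult_def using hermitian_entry[OF H] by simp
  have "qf (A - (\<chi> i j. A $ i $ k * cnj (A $ j $ k) / of_real a)) x = qf A x -
      (\<Sum>i\<in>UNIV. \<Sum>j\<in>UNIV. (cnj (x $ i) * A $ i $ k) * (cnj (A $ j $ k) * x $ j)) / of_real a"
    by (simp add: qf_def cinner_def matrix_vector_mult_def sum_subtractf
        right_diff_distrib left_diff_distrib sum_distrib_left sum_divide_distrib mult_ac)
  also have "(\<Sum>i\<in>UNIV. \<Sum>j\<in>UNIV. (cnj (x $ i) * A $ i $ k) * (cnj (A $ j $ k) * x $ j)) =
      (\<Sum>i\<in>UNIV. cnj (x $ i) * A $ i $ k) * (\<Sum>j\<in>UNIV. cnj (A $ j $ k) * x $ j)"
    by (simp add: sum_product)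
  finally have e3: "qf (A - (\<chi> i j. A $ i $ k * cnj (A $ j $ k) / of_real a)) x = qf A x - b * cnj b / of_real a"
    using s1 s2 by (simp add: mult.commute)
  show ?thesis
    unfolding qf_add_scale e1 e2 e3 qf_axis akk
    by (cases "a = 0") (simp_all add: b_def field_simps)
qed

text \<open>One step of a Cholesky factorisation. If the pivot A k k vanishes, then w = 0
  (division by zero) and row and column k of A are already zero.\<close>

lemma psd_minus_pivot_outer:
  fixes A :: "'n::finite cmat" and k :: 'n
  assumes A: "psd A"
  defines "w \<equiv> (\<chi> i. A $ i $ k / of_real (sqrt (Re (A $ k $ k))))"
  shows "psd (A - outer w w)" "(A - outer w w) $ i $ k = 0" "(A - outer w w) $ k $ i = 0"
proof -
  define a where "a = Re (A $ k $ k)"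
  have H: "hermitian A"
    using A by (rule psd_hermitian)
  have akk: "A $ k $ k = of_real a"
    unfolding a_def by (rule psd_diag_real[OF A])
  have "complex_of_real (sqrt a) * cnj (complex_of_real (sqrt a)) = of_real a"
    using psd_diag_nonneg[OF A, of k] by (simp add: a_def flip: of_real_mult)
  then have ww: "outer w w = (\<chi> i j. A $ i $ k * cnj (A $ j $ k) / of_real a)"
    unfolding outer_def w_def a_def[symmetric] by (simp add: vec_eq_iff)
  have "hermitian (A - outer w w)"
    unfolding hermitian_def cadj_def vec_eq_iff ww using hermitian_entry[OF H] by simp
  then show "psd (A - outer w w)"
    unfolding psd_iff_qf ww qf_minus_pivot_outer[OF H akk]
    using psd_qf_Im[OF A] psd_qf_nonneg[OF A] by simp
  have "(A - outer w w) $ i $ k = 0 \<and> (A - outer w w) $ k $ i = 0"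
  proof (cases "a = 0")
    case True
    then have kk: "A $ k $ k = 0"
      using akk by simp
    show ?thesis
      using psd_diag_eq_0[OF A kk, of i] True by (simp add: ww)
  next
    case False
    then show ?thesis
      using hermitian_entry[OF H, of i k] by (simp add: ww akk)
  qed
  then show "(A - outer w w) $ i $ k = 0" "(A - outer w w) $ k $ i = 0"
    by auto
qed

lemma psd_sum_outer_on:
  fixes S :: "'n::finite set"
  assumes "finite S"
  shows "psd A \<Longrightarrow> (\<forall>i j. i \<notin> S \<or> j \<notin> S \<longrightarrow> A $ i $ j = 0)
     \<Longrightarrow> \<exists>v. A = (\<Sum>i\<in>S. outer (v i) (v i))"
  using assms
proof (induct S arbitrary: A rule: finite_induct)
  case empty
  then have "A = 0"
    by (simp add: vec_eq_iff)
  then show ?case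
    by simp
next
  case (insert k S)
  note A = insert.prems(1) and supp = insert.prems(2)
  define w where "w = (\<chi> i. A $ i $ k / of_real (sqrt (Re (A $ k $ k))))"
  note pivot = psd_minus_pivot_outer[OF A, of k, folded w_def]
  have "\<forall>i j. i \<notin> S \<or> j \<notin> S \<longrightarrow> (A - outer w w) $ i $ j = 0"
  proof (intro allI impI)
    fix i j
    assume "i \<notin> S \<or> j \<notin> S"
    then consider "i = k" | "j = k" | "i \<notin> insert k S" | "j \<notin> insert k S"
      by blast
    then show "(A - outer w w) $ i $ j = 0"
    proof cases
      case 3
      then show ?thesis
        using supp by (simp add: outer_def w_def)
    next
      case 4
      then show ?thesis
        using supp by (simp add: outer_def w_def)
    qed (use pivot in auto)
  qed
  then obtain v where v: "A - outer w w = (\<Sum>i\<in>S. outer (v i) (v i))"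
    using insert.hyps(3)[OF pivot(1)] by blast
  have "A = outer w w + (A - outer w w)"
    by simp
  also have "\<dots> = outer w w + (\<Sum>i\<in>S. outer ((v(k := w)) i) ((v(k := w)) i))"
    unfolding v using insert.hyps by (auto intro: sum.cong)
  also have "\<dots> = (\<Sum>i\<in>insert k S. outer ((v(k := w)) i) ((v(k := w)) i))"
    using insert.hyps by simp
  finally show ?case
    by blast
qed

lemma psd_sum_outer: "psd (A::'n::finite cmat) \<Longrightarrow> \<exists>v. A = (\<Sum>i\<in>(UNIV::'n set). outer (v i) (v i))"
  using psd_sum_outer_on[of UNIV A] by simp

lemma psd_mult_eq_0_if_trace:
  fixes A B :: "'n::finite cmat"
  assumes A: "psd A" and B: "psd B" and t: "trace (A ** B) = 0"
  shows "B ** A = 0" "A ** B = 0"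
proof -
  obtain v :: "'n \<Rightarrow> complex^'n" where v: "A = (\<Sum>i\<in>UNIV. outer (v i) (v i))"
    using psd_sum_outer[OF A] by blast
  have "trace (A ** B) = (\<Sum>i\<in>UNIV. qf B (v i))"
    unfolding v by (simp add: matrix_sum_rdistrib trace_sum trace_outer_mult)
  then have "(\<Sum>i\<in>UNIV. Re (qf B (v i))) = 0"
    using t by (metis Re_sum zero_complex.sel(1))
  then have "Re (qf B (v i)) = 0" for i
    by (simp add: sum_nonneg_eq_0_iff psd_qf_nonneg[OF B])
  then have "B *v v i = 0" for i
    by (simp add: psd_kernel[OF B] psd_qf_eq_0_iff[OF B])
  then show BA: "B ** A = 0"
    unfolding v by (simp add: matrix_sum_ldistrib mult_outer)
  then show "A ** B = 0"
    by (rule hermitian_mult_eq_0_commute[OF psd_hermitian[OF B] psd_hermitian[OF A]])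
qed

lemma psd_mult_orth_proj_eq_0:
  assumes "psd A" "orth_proj P" "trace (A ** P) = 0"
  shows "A ** P = 0"
  using psd_mult_eq_0_if_trace[OF assms(1) psd_orth_proj[OF assms(2)] assms(3)] by auto

subsection \<open>Orthogonal projections onto complex subspaces\<close>

definition csubspace :: "(complex^'n::finite) set \<Rightarrow> bool" where
  "csubspace S \<longleftrightarrow> 0 \<in> S \<and> (\<forall>x\<in>S. \<forall>y\<in>S. x + y \<in> S) \<and> (\<forall>x\<in>S. \<forall>c. c *s x \<in> S)"

lemma csubspace_subspace: "csubspace S \<Longrightarrow> subspace S"
proof -
  have scaleR: "c *\<^sub>R x = complex_of_real c *s x" for c and x :: "complex^'n"
    unfolding vec_eq_iff vector_scaleR_component vector_scalar_mult_def by (simp add: scaleR_conv_of_real)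
  show "csubspace S \<Longrightarrow> subspace S"
    unfolding csubspace_def subspace_def by (auto simp: scaleR)
qed

lemma csubspace_sum:
  assumes "csubspace S"
  shows "finite I \<Longrightarrow> (\<And>i. i \<in> I \<Longrightarrow> f i \<in> S) \<Longrightarrow> (\<Sum>i\<in>I. f i) \<in> S"
  by (induct I rule: finite_induct) (use assms in \<open>auto simp: csubspace_def\<close>)

lemma csubspace_range: "csubspace (range (\<lambda>x. (A::'n::finite cmat) *v x))"
  unfolding csubspace_def
  by (auto intro: range_eqI[of _ _ 0] simp: matrix_vector_right_distrib[symmetric]
      matrix_vector_mult_scale[symmetric])

lemma csubspace_common_fixed: "csubspace {x. (U::'n::finite cmat) *v x = x \<and> (W::'n cmat) *v x = x}"
  unfolding csubspace_def by (auto simp: matrix_vector_right_distrib matrix_vector_mult_scale)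

lemma Re_cinner: "Re (cinner a b) = inner a b"
  by (simp add: cinner_def inner_vec_def inner_complex_def Re_sum)

lemma orthogonal_residual_matrix:
  fixes S :: "(complex^'n::finite) set"
  assumes S: "csubspace S"
  obtains P where "\<And>y. P *v y \<in> S" "\<And>x w. w \<in> S \<Longrightarrow> inner (x - P *v x) w = 0"
proof -
  define nearest where "nearest x y \<longleftrightarrow> y \<in> S \<and> (\<forall>w\<in>S. inner (x - y) w = 0)" for x y :: "complex^'n"
  have "\<exists>y. nearest x y" for x
  proof -
    obtain y z where "y \<in> span S" "\<And>w. w \<in> span S \<Longrightarrow> orthogonal z w" "x = y + z"
      using orthogonal_subspace_decomp_exists[of S x] by metis
    then show ?thesis
      unfolding nearest_def span_eq_iff[THEN iffD2, OF csubspace_subspace[OF S]] orthogonal_def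
      by (intro exI[of _ y]) auto
  qed
  then obtain p where nearest_p: "\<And>x. nearest x (p x)"
    by metis
  define P where "P = (\<chi> i j. p (axis j 1) $ i)"
  have P_apply: "P *v x = (\<Sum>j\<in>UNIV. x $ j *s p (axis j 1))" for x
    by (simp add: P_def matrix_vector_mult_def vec_eq_iff sum_component mult.commute)
  have "P *v x \<in> S" for x
    unfolding P_apply using S nearest_p unfolding nearest_def csubspace_def
    by (intro csubspace_sum[OF S]) auto
  moreover have "inner (x - P *v x) w = 0" if w: "w \<in> S" for x w
  proof -
    have coords: "(\<Sum>j\<in>UNIV. x $ j *s axis j 1) = x"
      by (simp add: vec_eq_iff sum_component axis_def if_distrib if_distribR cong: if_cong)
    have "x - P *v x = (\<Sum>j\<in>UNIV. x $ j *s (axis j 1 - p (axis j 1)))"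
      unfolding P_apply by (subst (1) coords[symmetric]) (simp add: sum_subtractf vector_ssub_ldistrib)
    moreover have inner_scale: "inner (c *s a) w = inner a (cnj c *s w)" for c and a :: "complex^'n"
      by (simp add: inner_vec_def inner_complex_def algebra_simps)
    ultimately have "inner (x - P *v x) w = (\<Sum>j\<in>UNIV. inner (axis j 1 - p (axis j 1)) (cnj (x $ j) *s w))"
      by (simp only: inner_sum_left inner_scale)
    also have "\<dots> = 0"
      using nearest_p w S unfolding nearest_def csubspace_def by (intro sum.neutral) auto
    finally show ?thesis .
  qed
  ultimately show thesis
    using that by blast
qed

text \<open>The real inner product on complex^n is the real part of the complex one, so a real
  orthogonal projection onto a complex subspace is also self-adjoint for the complex one.\<close>

lemma orth_proj_if_orthogonal_residual:
  fixes S :: "(complex^'n::finite) set"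
  assumes S: "csubspace S" and P_in: "\<And>y. P *v y \<in> S"
    and residual: "\<And>x w. w \<in> S \<Longrightarrow> inner (x - P *v x) w = 0"
  shows "orth_proj P" "\<And>x. x \<in> S \<Longrightarrow> P *v x = x"
proof -
  have P_fix: "P *v x = x" if "x \<in> S" for x
  proof -
    have "x - P *v x \<in> S"
      using that P_in csubspace_subspace[OF S] by (simp add: subspace_diff)
    then have "inner (x - P *v x) (x - P *v x) = 0"
      by (rule residual)
    then show ?thesis
      by simp
  qed
  then show "\<And>x. x \<in> S \<Longrightarrow> P *v x = x" .
  have idem: "P ** P = P"
    unfolding matrix_eq by (simp add: matrix_vector_mul_assoc[symmetric] P_fix P_in)
  have inner_sym: "inner (P *v x) y = inner x (P *v y)" for x y
  proof -
    have "inner (P *v x) (y - P *v y) = 0" "inner (P *v y) (x - P *v x) = 0"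
      using residual P_in by (auto simp: inner_commute)
    then have "inner (P *v x) y = inner (P *v x) (P *v y)" "inner (P *v y) x = inner (P *v y) (P *v x)"
      by (simp_all add: inner_diff_right)
    then show ?thesis
      by (metis inner_commute)
  qed
  have cinner_sym: "cinner (P *v x) y = cinner x (P *v y)" for x y
  proof (rule complex_eqI)
    show "Re (cinner (P *v x) y) = Re (cinner x (P *v y))"
      by (simp add: Re_cinner inner_sym)
    have "Re (cinner (\<i> *s (P *v x)) y) = Re (cinner (\<i> *s x) (P *v y))"
      by (simp add: Re_cinner inner_sym flip: matrix_vector_mult_scale)
    then show "Im (cinner (P *v x) y) = Im (cinner x (P *v y))"
      by (simp add: cinner_scale_left)
  qed
  have "P *v x = cadj P *v x" for x
  proof -
    have "cinner (P *v x) y = cinner (cadj P *v x) y" for y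
      using cinner_sym cinner_cadj by metis
    then have "cinner (P *v x - cadj P *v x) (P *v x - cadj P *v x) = 0"
      by (simp add: cinner_diff_left)
    then show ?thesis
      by simp
  qed
  then show "orth_proj P"
    using idem by (simp add: orth_proj_def matrix_eq)
qed

lemma orth_proj_onto:
  fixes S :: "(complex^'n::finite) set"
  assumes S: "csubspace S"
  obtains P where "orth_proj P" "\<And>y. P *v y \<in> S" "\<And>x. x \<in> S \<Longrightarrow> P *v x = x"
proof -
  obtain P where "\<And>y. P *v y \<in> S" "\<And>x w. w \<in> S \<Longrightarrow> inner (x - P *v x) w = 0"
    using orthogonal_residual_matrix[OF S] by blast
  then show thesis
    using that orth_proj_if_orthogonal_residual[OF S] by blast
qed

lemma orth_proj_meet:
  assumes U: "orth_proj U" and W: "orth_proj W"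
  obtains P where "orth_proj P" "U ** P = P" "W ** P = P"
    "\<And>x. U *v x = x \<Longrightarrow> W *v x = x \<Longrightarrow> P *v x = x"
proof -
  obtain P where P: "orth_proj P" and P_in: "\<And>y. P *v y \<in> {x. U *v x = x \<and> W *v x = x}"
    and P_fix: "\<And>x. x \<in> {x. U *v x = x \<and> W *v x = x} \<Longrightarrow> P *v x = x"
    using orth_proj_onto[OF csubspace_common_fixed] by blast
  have "U ** P = P" "W ** P = P"
    unfolding matrix_eq using P_in by (simp_all add: matrix_vector_mul_assoc[symmetric])
  then show thesis
    using that P P_fix by blast
qed

lemma psd_compression_minus_meet:
  assumes U: "orth_proj U" and W: "orth_proj W" and P: "orth_proj P"
    and UP: "U ** P = P" and WP: "W ** P = P"
  shows "psd (W ** U ** W - P)"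
proof -
  have PU: "P ** U = P" and PW: "P ** W = P"
    using orth_proj_absorb_commute UP WP U W P by blast+
  have UU: "W ** U ** U = W ** U"
    by (metis matrix_mul_assoc orth_proj_idem[OF U])
  have "W ** U ** perp P ** (U ** W) = W ** U ** W - W ** (U ** P) ** U ** W"
    by (simp add: perp_def matrix_diff_ldistrib matrix_diff_rdistrib matrix_mul_assoc UU)
  also have "W ** (U ** P) ** U ** W = P"
    by (simp add: UP WP PU PW flip: matrix_mul_assoc)
  finally have "cadj (U ** W) ** perp P ** (U ** W) = W ** U ** W - P"
    by (simp add: cadj_mult orth_proj_cadj U W)
  then show ?thesis
    using psd_congruence[OF psd_orth_proj[OF orth_proj_perp[OF P]], of "U ** W"] by simp
qed

subsection \<open>The maps G and F\<close>

abbreviation T_map :: "('a::finite \<times> 'b::finite) cmat \<Rightarrow> 'a cmat \<Rightarrow> 'a cmat" where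
  "T_map \<gamma> X \<equiv> F_map \<gamma> (G_map \<gamma> X)"

lemma sum_interleave:
  "(\<Sum>j\<in>J. \<Sum>j'\<in>J'. \<Sum>a\<in>A. \<Sum>a'\<in>A'. f a j a' j') = (\<Sum>a\<in>A. \<Sum>j\<in>J. \<Sum>a'\<in>A'. \<Sum>j'\<in>J'. f a j a' j')"
proof -
  have "(\<Sum>j\<in>J. \<Sum>j'\<in>J'. \<Sum>a\<in>A. \<Sum>a'\<in>A'. f a j a' j') = (\<Sum>j\<in>J. \<Sum>a\<in>A. \<Sum>j'\<in>J'. \<Sum>a'\<in>A'. f a j a' j')"
    by (intro sum.cong refl) (rule sum.swap)
  also have "\<dots> = (\<Sum>j\<in>J. \<Sum>a\<in>A. \<Sum>a'\<in>A'. \<Sum>j'\<in>J'. f a j a' j')"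
    by (intro sum.cong refl) (rule sum.swap)
  also have "\<dots> = (\<Sum>a\<in>A. \<Sum>j\<in>J. \<Sum>a'\<in>A'. \<Sum>j'\<in>J'. f a j a' j')"
    by (rule sum.swap)
  finally show ?thesis .
qed

lemma trace_mult_kron:
  "trace (\<gamma> ** kron X Y) =
    (\<Sum>a\<in>UNIV. \<Sum>j\<in>UNIV. \<Sum>a'\<in>UNIV. \<Sum>j'\<in>UNIV. \<gamma> $ (a, j) $ (a', j') * (X $ a' $ a * Y $ j' $ j))"
  by (simp add: trace_def matrix_matrix_mult_def kron_def sum_UNIV_prod)

lemma trace_G_map_mult: "trace (G_map \<gamma> X ** Y) = trace (\<gamma> ** kron X Y)"
proof -
  have "trace (G_map \<gamma> X ** Y) = (\<Sum>j\<in>UNIV. \<Sum>j'\<in>UNIV. \<Sum>a\<in>UNIV. \<Sum>a'\<in>UNIV.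
      \<gamma> $ (a, j) $ (a', j') * (X $ a' $ a * Y $ j' $ j))"
    unfolding trace_def matrix_matrix_mult_def G_map_def
    by (simp only: vec_lambda_beta sum_distrib_right mult.assoc)
  also have "\<dots> = trace (\<gamma> ** kron X Y)"
    unfolding trace_mult_kron by (rule sum_interleave)
  finally show ?thesis .
qed

lemma trace_mult_F_map: "trace (X ** F_map \<gamma> Y) = trace (\<gamma> ** kron X Y)"
proof -
  have "trace (X ** F_map \<gamma> Y) = (\<Sum>a'\<in>UNIV. \<Sum>a\<in>UNIV. \<Sum>j\<in>UNIV. \<Sum>j'\<in>UNIV.
      \<gamma> $ (a, j) $ (a', j') * (X $ a' $ a * Y $ j' $ j))"
    unfolding trace_def matrix_matrix_mult_def F_map_def
    by (simp only: vec_lambda_beta sum_distrib_left) (simp only: mult_ac)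
  also have "\<dots> = (\<Sum>a\<in>UNIV. \<Sum>a'\<in>UNIV. \<Sum>j\<in>UNIV. \<Sum>j'\<in>UNIV.
      \<gamma> $ (a, j) $ (a', j') * (X $ a' $ a * Y $ j' $ j))"
    by (rule sum.swap)
  also have "\<dots> = trace (\<gamma> ** kron X Y)"
    unfolding trace_mult_kron by (intro sum.cong refl) (rule sum.swap)
  finally show ?thesis .
qed

lemma G_map_add: "G_map \<gamma> (X + Y) = G_map \<gamma> X + G_map \<gamma> Y"
  and G_map_diff: "G_map \<gamma> (X - Y) = G_map \<gamma> X - G_map \<gamma> Y"
  and G_map_zero [simp]: "G_map \<gamma> 0 = 0"
  by (simp_all add: G_map_def vec_eq_iff distrib_left sum.distrib right_diff_distrib sum_subtractf)

lemma F_map_add: "F_map \<gamma> (X + Y) = F_map \<gamma> X + F_map \<gamma> Y"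
  and F_map_diff: "F_map \<gamma> (X - Y) = F_map \<gamma> X - F_map \<gamma> Y"
  and F_map_zero [simp]: "F_map \<gamma> 0 = 0"
  by (simp_all add: F_map_def vec_eq_iff distrib_left sum.distrib right_diff_distrib sum_subtractf)

lemma G_map_sum: "finite I \<Longrightarrow> G_map \<gamma> (\<Sum>i\<in>I. X i) = (\<Sum>i\<in>I. G_map \<gamma> (X i))"
  by (induct I rule: finite_induct) (auto simp: G_map_add)

lemma F_map_sum: "finite I \<Longrightarrow> F_map \<gamma> (\<Sum>i\<in>I. X i) = (\<Sum>i\<in>I. F_map \<gamma> (X i))"
  by (induct I rule: finite_induct) (auto simp: F_map_add)

lemma G_map_cadj:
  assumes "hermitian \<gamma>"
  shows "G_map \<gamma> (cadj X) = cadj (G_map \<gamma> X)"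
proof -
  have "(\<Sum>a\<in>UNIV. \<Sum>a'\<in>UNIV. \<gamma> $ (a, j) $ (a', j') * cnj (X $ a $ a')) =
        (\<Sum>a\<in>UNIV. \<Sum>a'\<in>UNIV. cnj (\<gamma> $ (a, j') $ (a', j)) * cnj (X $ a' $ a))" for j j'
    using hermitian_entry[OF assms] by (subst sum.swap) simp
  then show ?thesis
    by (simp add: G_map_def cadj_def vec_eq_iff)
qed

lemma F_map_cadj:
  assumes "hermitian \<gamma>"
  shows "F_map \<gamma> (cadj X) = cadj (F_map \<gamma> X)"
proof -
  have "(\<Sum>a\<in>UNIV. \<Sum>a'\<in>UNIV. \<gamma> $ (j, a) $ (j', a') * cnj (X $ a $ a')) =
        (\<Sum>a\<in>UNIV. \<Sum>a'\<in>UNIV. cnj (\<gamma> $ (j', a) $ (j, a')) * cnj (X $ a' $ a))" for j j'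
    using hermitian_entry[OF assms] by (subst sum.swap) simp
  then show ?thesis
    by (simp add: F_map_def cadj_def vec_eq_iff)
qed

lemma tinner_G_map_left: "hermitian \<gamma> \<Longrightarrow> tinner (G_map \<gamma> X) Z = tinner X (F_map \<gamma> Z)"
  unfolding tinner_def by (simp add: trace_G_map_mult trace_mult_F_map flip: F_map_cadj)

lemma tinner_F_map_left:
  assumes "hermitian \<gamma>"
  shows "tinner (F_map \<gamma> Z) X = tinner Z (G_map \<gamma> X)"
proof -
  have "tinner (F_map \<gamma> Z) X = trace (cadj X ** F_map \<gamma> Z)"
    unfolding tinner_def by (rule trace_mul_sym)
  also have "\<dots> = trace (G_map \<gamma> (cadj X) ** Z)"
    by (simp only: trace_mult_F_map trace_G_map_mult)
  also have "\<dots> = tinner Z (G_map \<gamma> X)"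
    unfolding tinner_def G_map_cadj[OF assms] by (rule trace_mul_sym)
  finally show ?thesis .
qed

lemma selfadjoint_map_T: "hermitian \<gamma> \<Longrightarrow> selfadjoint_map (F_map \<gamma> \<circ> G_map \<gamma>)"
  unfolding selfadjoint_map_def comp_def by (metis tinner_F_map_left tinner_G_map_left)

lemma G_map_eq_0_if_T_map_eq_0:
  assumes "hermitian \<gamma>" "T_map \<gamma> X = 0"
  shows "G_map \<gamma> X = 0"
proof -
  have "tinner (G_map \<gamma> X) (G_map \<gamma> X) = tinner (T_map \<gamma> X) X"
    by (rule tinner_F_map_left[OF assms(1), symmetric])
  then show ?thesis
    using assms(2) tinner_self_eq_0 by (simp add: tinner_def)
qed

definition tensor_vec :: "complex^'a::finite \<Rightarrow> complex^'b::finite \<Rightarrow> complex^('a \<times> 'b)" where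
  "tensor_vec u x = (\<chi> p. u $ fst p * x $ snd p)"

lemma qf_G_map_outer: "qf (G_map \<gamma> (outer u u)) x = qf \<gamma> (tensor_vec u x)"
proof -
  have "qf (G_map \<gamma> (outer u u)) x = (\<Sum>j\<in>UNIV. \<Sum>j'\<in>UNIV. \<Sum>a\<in>UNIV. \<Sum>a'\<in>UNIV.
      cnj (u $ a * x $ j) * \<gamma> $ (a, j) $ (a', j') * (u $ a' * x $ j'))"
    unfolding qf_def cinner_def matrix_vector_mult_def G_map_def outer_def
    by (simp only: vec_lambda_beta sum_distrib_left sum_distrib_right) (simp only: mult_ac complex_cnj_mult)
  also have "\<dots> = (\<Sum>a\<in>UNIV. \<Sum>j\<in>UNIV. \<Sum>a'\<in>UNIV. \<Sum>j'\<in>UNIV.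
      cnj (u $ a * x $ j) * \<gamma> $ (a, j) $ (a', j') * (u $ a' * x $ j'))"
    by (rule sum_interleave)
  also have "\<dots> = qf \<gamma> (tensor_vec u x)"
    unfolding qf_def cinner_def matrix_vector_mult_def tensor_vec_def sum_UNIV_prod
    by (simp only: vec_lambda_beta sum_distrib_left fst_conv snd_conv) (simp only: mult_ac)
  finally show ?thesis .
qed

lemma qf_F_map_outer: "qf (F_map \<gamma> (outer w w)) x = qf \<gamma> (tensor_vec x w)"
proof -
  have "qf (F_map \<gamma> (outer w w)) x = (\<Sum>i\<in>UNIV. \<Sum>i'\<in>UNIV. \<Sum>b\<in>UNIV. \<Sum>b'\<in>UNIV.
      cnj (x $ i * w $ b) * \<gamma> $ (i, b) $ (i', b') * (x $ i' * w $ b'))"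
    unfolding qf_def cinner_def matrix_vector_mult_def F_map_def outer_def
    by (simp only: vec_lambda_beta sum_distrib_left sum_distrib_right) (simp only: mult_ac complex_cnj_mult)
  also have "\<dots> = (\<Sum>i\<in>UNIV. \<Sum>b\<in>UNIV. \<Sum>i'\<in>UNIV. \<Sum>b'\<in>UNIV.
      cnj (x $ i * w $ b) * \<gamma> $ (i, b) $ (i', b') * (x $ i' * w $ b'))"
    by (intro sum.cong refl) (rule sum.swap)
  also have "\<dots> = qf \<gamma> (tensor_vec x w)"
    unfolding qf_def cinner_def matrix_vector_mult_def tensor_vec_def sum_UNIV_prod
    by (simp only: vec_lambda_beta sum_distrib_left fst_conv snd_conv) (simp only: mult_ac)
  finally show ?thesis .
qed

lemma psd_G_map:
  fixes \<gamma> :: "('a::finite \<times> 'b::finite) cmat"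
  assumes g: "psd \<gamma>" and X: "psd X"
  shows "psd (G_map \<gamma> X)"
proof -
  obtain u :: "'a \<Rightarrow> complex^'a" where u: "X = (\<Sum>i\<in>UNIV. outer (u i) (u i))"
    using psd_sum_outer[OF X] by blast
  have "hermitian (G_map \<gamma> X)"
    using G_map_cadj[OF psd_hermitian[OF g], of X] psd_cadj[OF X] by (simp add: hermitian_def)
  moreover have "qf (G_map \<gamma> X) x = (\<Sum>i\<in>UNIV. qf \<gamma> (tensor_vec (u i) x))" for x
    unfolding u by (simp add: G_map_sum qf_sum_matrix qf_G_map_outer)
  ultimately show ?thesis
    unfolding psd_iff_qf using psd_qf_Im[OF g] psd_qf_nonneg[OF g] by (simp add: sum_nonneg)
qed

lemma psd_F_map:
  fixes \<gamma> :: "('a::finite \<times> 'b::finite) cmat"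
  assumes g: "psd \<gamma>" and X: "psd X"
  shows "psd (F_map \<gamma> X)"
proof -
  obtain u :: "'b \<Rightarrow> complex^'b" where u: "X = (\<Sum>i\<in>UNIV. outer (u i) (u i))"
    using psd_sum_outer[OF X] by blast
  have "hermitian (F_map \<gamma> X)"
    using F_map_cadj[OF psd_hermitian[OF g], of X] psd_cadj[OF X] by (simp add: hermitian_def)
  moreover have "qf (F_map \<gamma> X) x = (\<Sum>i\<in>UNIV. qf \<gamma> (tensor_vec x (u i)))" for x
    unfolding u by (simp add: F_map_sum qf_sum_matrix qf_F_map_outer)
  ultimately show ?thesis
    unfolding psd_iff_qf using psd_qf_Im[OF g] psd_qf_nonneg[OF g] by (simp add: sum_nonneg)
qed

lemma psd_T_map: "psd \<gamma> \<Longrightarrow> psd X \<Longrightarrow> psd (T_map \<gamma> X)"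
  by (simp add: psd_F_map psd_G_map)

lemma positive_map_T: "psd \<gamma> \<Longrightarrow> positive_map (F_map \<gamma> \<circ> G_map \<gamma>)"
  unfolding positive_map_def by (simp add: psd_T_map)

definition cross_traces_vanish :: "('k::finite \<times> 'm::finite) cmat \<Rightarrow> 'k cmat \<Rightarrow> 'm cmat \<Rightarrow> bool" where
  "cross_traces_vanish \<gamma> W V \<longleftrightarrow> trace (\<gamma> ** kron W (perp V)) = 0 \<and> trace (\<gamma> ** kron (perp W) V) = 0"

definition block_diagonal :: "('k::finite \<times> 'm::finite) cmat \<Rightarrow> 'k cmat \<Rightarrow> 'm cmat \<Rightarrow> bool" where
  "block_diagonal \<gamma> W V \<longleftrightarrow>
     \<gamma> = kron W V ** \<gamma> ** kron W V + kron (perp W) (perp V) ** \<gamma> ** kron (perp W) (perp V)"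

lemma cross_traces_vanish_perp: "cross_traces_vanish \<gamma> (perp W) (perp V) \<longleftrightarrow> cross_traces_vanish \<gamma> W V"
  by (auto simp: cross_traces_vanish_def)

lemma cross_traces_vanish_iff:
  assumes "psd \<gamma>" "orth_proj W" "orth_proj V"
  shows "cross_traces_vanish \<gamma> W V \<longleftrightarrow> \<gamma> ** kron W (perp V) = 0 \<and> \<gamma> ** kron (perp W) V = 0"
  using psd_mult_orth_proj_eq_0[OF assms(1) orth_proj_kron] assms(2,3)
  by (auto simp: cross_traces_vanish_def orth_proj_perp)

lemma trace_mult_kron_eq_0:
  assumes H: "hermitian \<gamma>" and P: "orth_proj P" and Q: "orth_proj Q" and z: "\<gamma> ** kron P Q = 0"
  shows "trace (\<gamma> ** kron (P ** A) (Q ** B)) = 0" "trace (\<gamma> ** kron (A ** P) (B ** Q)) = 0"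
proof -
  show "trace (\<gamma> ** kron (P ** A) (Q ** B)) = 0"
    using z by (simp add: matrix_mul_assoc flip: kron_mult)
  have "kron P Q ** \<gamma> = 0"
    using hermitian_mult_eq_0_commute[OF H orth_proj_hermitian[OF orth_proj_kron[OF P Q]] z] .
  moreover have "trace (\<gamma> ** kron (A ** P) (B ** Q)) = trace (kron P Q ** \<gamma> ** kron A B)"
    by (subst trace_mult_cycle) (simp add: kron_mult flip: matrix_mul_assoc)
  ultimately show "trace (\<gamma> ** kron (A ** P) (B ** Q)) = 0"
    by simp
qed

lemma G_map_corner:
  assumes H: "hermitian \<gamma>" and W: "orth_proj W" and V: "orth_proj V"
    and z: "\<gamma> ** kron W (perp V) = 0"
  shows "G_map \<gamma> (W ** Z ** W) = V ** G_map \<gamma> (W ** Z ** W) ** V"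
proof -
  note vanish = trace_mult_kron_eq_0[OF H W orth_proj_perp[OF V] z]
  let ?G = "G_map \<gamma> (W ** Z ** W)"
  have "?G ** perp V = 0"
  proof (rule zero_if_trace_mult_zero)
    fix Y
    have "trace (?G ** perp V ** Y) = trace (\<gamma> ** kron (W ** (Z ** W)) (perp V ** Y))"
      by (simp add: matrix_mul_assoc trace_G_map_mult flip: matrix_mul_assoc)
    then show "trace (?G ** perp V ** Y) = 0"
      using vanish(1) by simp
  qed
  moreover have "perp V ** ?G = 0"
  proof (rule zero_if_trace_mult_zero)
    fix Y
    have "trace (perp V ** ?G ** Y) = trace (\<gamma> ** kron (W ** Z ** W) (Y ** perp V))"
      by (metis trace_mult_cycle trace_G_map_mult matrix_mul_assoc)
    then show "trace (perp V ** ?G ** Y) = 0"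
      using vanish(2) by simp
  qed
  ultimately show ?thesis
    by (metis mult_perp_eq_0_iff perp_mult_eq_0_iff)
qed

lemma F_map_corner:
  assumes H: "hermitian \<gamma>" and W: "orth_proj W" and V: "orth_proj V"
    and z: "\<gamma> ** kron (perp W) V = 0"
  shows "F_map \<gamma> (V ** Y ** V) = W ** F_map \<gamma> (V ** Y ** V) ** W"
proof -
  note vanish = trace_mult_kron_eq_0[OF H orth_proj_perp[OF W] V z]
  let ?F = "F_map \<gamma> (V ** Y ** V)"
  have "?F ** perp W = 0"
  proof (rule zero_if_trace_mult_zero)
    fix X
    have "trace (?F ** perp W ** X) = trace (\<gamma> ** kron (perp W ** X) (V ** (Y ** V)))"
      by (metis trace_mult_cycle trace_mult_F_map matrix_mul_assoc)
    then show "trace (?F ** perp W ** X) = 0"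
      using vanish(1) by simp
  qed
  moreover have "perp W ** ?F = 0"
  proof (rule zero_if_trace_mult_zero)
    fix X
    have "trace (perp W ** ?F ** X) = trace (\<gamma> ** kron (X ** perp W) (V ** Y ** V))"
      by (metis trace_mult_cycle trace_mult_F_map matrix_mul_assoc)
    then show "trace (perp W ** ?F ** X) = 0"
      using vanish(2) by simp
  qed
  ultimately show ?thesis
    by (metis mult_perp_eq_0_iff perp_mult_eq_0_iff)
qed

lemma invariant_corner_if_cross_traces_vanish:
  assumes g: "psd \<gamma>" and W: "orth_proj W" and V: "orth_proj V"
    and a: "cross_traces_vanish \<gamma> W V"
  shows "invariant_corner (F_map \<gamma> \<circ> G_map \<gamma>) W"
proof -
  have H: "hermitian \<gamma>"
    using g by (rule psd_hermitian)
  have z: "\<gamma> ** kron W (perp V) = 0" "\<gamma> ** kron (perp W) V = 0"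
    using a cross_traces_vanish_iff[OF g W V] by auto
  have "T_map \<gamma> (W ** Z ** W) = W ** T_map \<gamma> (W ** Z ** W) ** W" for Z
  proof -
    have G: "G_map \<gamma> (W ** Z ** W) = V ** G_map \<gamma> (W ** Z ** W) ** V"
      by (rule G_map_corner[OF H W V z(1)])
    show ?thesis
      using F_map_corner[OF H W V z(2), of "G_map \<gamma> (W ** Z ** W)"] by (simp only: G[symmetric])
  qed
  then show ?thesis
    by (simp add: invariant_corner_iff[OF W])
qed

lemma cross_traces_vanish_if_block_diagonal:
  assumes W: "orth_proj W" and V: "orth_proj V" and b: "block_diagonal \<gamma> W V"
  shows "cross_traces_vanish \<gamma> W V"
proof -
  have "\<gamma> ** K = kron W V ** \<gamma> ** (kron W V ** K)
      + kron (perp W) (perp V) ** \<gamma> ** (kron (perp W) (perp V) ** K)" for K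
    by (subst b[unfolded block_diagonal_def]) (simp add: matrix_add_rdistrib matrix_mul_assoc)
  from this[of "kron W (perp V)"] this[of "kron (perp W) V"] show ?thesis
    unfolding cross_traces_vanish_def
    by (simp add: kron_mult orth_proj_mult_perp[OF W] perp_mult_orth_proj[OF W]
        orth_proj_mult_perp[OF V] perp_mult_orth_proj[OF V] orth_proj_idem[OF W] orth_proj_idem[OF V])
qed

lemma G_map_off_diagonal_if_block_diagonal:
  fixes \<gamma> :: "('a::finite \<times> 'b::finite) cmat"
  assumes W: "orth_proj W" and b: "block_diagonal \<gamma> W V"
  shows "G_map \<gamma> (W ** Z ** perp W) = 0"
proof (rule zero_if_trace_mult_zero)
  fix Y :: "'b cmat"
  let ?N = "kron (W ** Z ** perp W) Y"
  have cycle: "trace ((K ** \<gamma> ** K) ** N) = trace (\<gamma> ** (K ** N ** K))" for K N :: "('a \<times> 'b) cmat"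
    by (metis matrix_mul_assoc trace_mul_sym)
  have absorb: "perp W ** (W ** A) = 0" "W ** (perp W ** A) = 0"
      "W ** (W ** A) = W ** A" "perp W ** (perp W ** A) = perp W ** A" for A :: "'a cmat"
    by (simp_all add: matrix_mul_assoc orth_proj_mult_perp[OF W] perp_mult_orth_proj[OF W]
        orth_proj_idem[OF W] orth_proj_idem[OF orth_proj_perp[OF W]])
  have "trace (G_map \<gamma> (W ** Z ** perp W) ** Y) = trace (\<gamma> ** ?N)"
    by (rule trace_G_map_mult)
  also have "\<dots> = trace (\<gamma> ** (kron W V ** ?N ** kron W V)) +
      trace (\<gamma> ** (kron (perp W) (perp V) ** ?N ** kron (perp W) (perp V)))"
    by (subst b[unfolded block_diagonal_def]) (simp only: matrix_add_rdistrib trace_add cycle)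
  also have "\<dots> = 0"
    by (simp add: kron_mult absorb orth_proj_mult_perp[OF W] perp_mult_orth_proj[OF W] flip: matrix_mul_assoc)
  finally show "trace (G_map \<gamma> (W ** Z ** perp W) ** Y) = 0" .
qed

definition matrix_unit :: "'n \<Rightarrow> 'n \<Rightarrow> 'n::finite cmat" where
  "matrix_unit i j = (\<chi> x y. if x = i \<and> y = j then 1 else 0)"

lemma kron_sandwich_entry:
  "(kron A B ** \<gamma> ** kron C D) $ (a, j) $ (a', j') =
    (B ** G_map \<gamma> (C ** matrix_unit a' a ** A) ** D) $ j $ j'"
proof -
  have unit: "C ** matrix_unit a' a ** A = (\<chi> x y. C $ x $ a' * A $ a $ y)"
  proof -
    have delta: "(\<Sum>k'\<in>UNIV. if k' = a' \<and> k = a then c else 0) = (if k = a then c else (0::complex))" for k c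
      by (cases "k = a") simp_all
    show ?thesis
      by (simp add: vec_eq_iff matrix_matrix_mult_def matrix_unit_def if_distrib if_distribR delta cong: if_cong)
  qed
  have "(kron A B ** \<gamma> ** kron C D) $ (a, j) $ (a', j') =
     (\<Sum>b'\<in>UNIV. \<Sum>l'\<in>UNIV. \<Sum>b\<in>UNIV. \<Sum>l\<in>UNIV.
        A $ a $ b * B $ j $ l * \<gamma> $ (b, l) $ (b', l') * (C $ b' $ a' * D $ l' $ j'))"
    unfolding matrix_matrix_mult_def kron_def
    by (simp only: vec_lambda_beta sum_UNIV_prod fst_conv snd_conv sum_distrib_right)
  also have "\<dots> = (\<Sum>l'\<in>UNIV. \<Sum>b'\<in>UNIV. \<Sum>l\<in>UNIV. \<Sum>b\<in>UNIV.
        A $ a $ b * B $ j $ l * \<gamma> $ (b, l) $ (b', l') * (C $ b' $ a' * D $ l' $ j'))"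
    by (subst sum.swap) (intro sum.cong refl, rule sum.swap)
  also have "\<dots> = (\<Sum>l'\<in>UNIV. \<Sum>l\<in>UNIV. \<Sum>b'\<in>UNIV. \<Sum>b\<in>UNIV.
        A $ a $ b * B $ j $ l * \<gamma> $ (b, l) $ (b', l') * (C $ b' $ a' * D $ l' $ j'))"
    by (rule sum.cong[OF refl], rule sum.swap)
  also have "\<dots> = (\<Sum>l'\<in>UNIV. \<Sum>l\<in>UNIV. \<Sum>b\<in>UNIV. \<Sum>b'\<in>UNIV.
        A $ a $ b * B $ j $ l * \<gamma> $ (b, l) $ (b', l') * (C $ b' $ a' * D $ l' $ j'))"
    by (rule sum.cong[OF refl], rule sum.cong[OF refl], rule sum.swap)
  also have "\<dots> = (B ** G_map \<gamma> (C ** matrix_unit a' a ** A) ** D) $ j $ j'"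
    unfolding unit unfolding matrix_matrix_mult_def G_map_def
    by (simp only: vec_lambda_beta sum_distrib_right sum_distrib_left) (simp only: mult_ac)
  finally show ?thesis .
qed

lemma kron_sandwich_eq_0:
  assumes "\<And>Z. G_map \<gamma> (C ** Z ** A) = 0"
  shows "kron A B ** \<gamma> ** kron C D = 0"
  unfolding vec_eq_iff by (simp add: kron_sandwich_entry assms)

lemma block_diagonal_if_off_diagonal_vanish:
  assumes H: "hermitian \<gamma>" and W: "orth_proj W" and V: "orth_proj V"
    and z: "\<gamma> ** kron W (perp V) = 0" "\<gamma> ** kron (perp W) V = 0"
    and off: "\<And>Z. G_map \<gamma> (W ** Z ** perp W) = 0" "\<And>Z. G_map \<gamma> (perp W ** Z ** W) = 0"
  shows "block_diagonal \<gamma> W V"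
proof -
  let ?K1 = "kron W V" and ?K2 = "kron (perp W) (perp V)"
  have hermitian_kron: "hermitian (kron P Q)" if "orth_proj P" "orth_proj Q" for P Q
    using orth_proj_hermitian[OF orth_proj_kron[OF that]] .
  have one: "mat 1 = ?K1 + ?K2 + kron W (perp V) + kron (perp W) V"
  proof -
    have "mat 1 = kron (W + perp W) (V + perp V)"
      by (simp add: add_perp)
    then show ?thesis
      by (simp add: kron_add_left kron_add_right algebra_simps)
  qed
  have z': "kron W (perp V) ** \<gamma> = 0" "kron (perp W) V ** \<gamma> = 0"
    using z by (auto intro!: hermitian_mult_eq_0_commute[OF H] hermitian_kron
        simp: W V orth_proj_perp)
  have right: "\<gamma> = \<gamma> ** ?K1 + \<gamma> ** ?K2"
    using arg_cong[OF one, of "\<lambda>M. \<gamma> ** M"] by (simp add: matrix_add_ldistrib z)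
  have left: "\<gamma> = ?K1 ** \<gamma> + ?K2 ** \<gamma>"
    using arg_cong[OF one, of "\<lambda>M. M ** \<gamma>"] by (simp add: matrix_add_rdistrib z')
  have "?K1 ** \<gamma> ** ?K2 = 0" "?K2 ** \<gamma> ** ?K1 = 0"
    using off by (auto intro: kron_sandwich_eq_0)
  moreover have "\<gamma> = (?K1 ** \<gamma> + ?K2 ** \<gamma>) ** ?K1 + (?K1 ** \<gamma> + ?K2 ** \<gamma>) ** ?K2"
    using left right by metis
  ultimately show ?thesis
    unfolding block_diagonal_def by (simp add: matrix_add_rdistrib)
qed

subsection \<open>Invariant corners of T\<close>

lemma cross_traces_vanish_if_T_map_proj:
  fixes \<gamma> :: "('a::finite \<times> 'b::finite) cmat"
  assumes g: "psd \<gamma>" and W: "orth_proj W" and inv: "T_map \<gamma> W = W ** T_map \<gamma> W ** W"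
  obtains V where "orth_proj V" "cross_traces_vanish \<gamma> W V"
proof -
  let ?A = "G_map \<gamma> W" and ?B = "G_map \<gamma> (perp W)"
  have "trace (?B ** ?A) = trace (perp W ** F_map \<gamma> ?A)"
    by (simp add: trace_G_map_mult trace_mult_F_map)
  also have "\<dots> = 0"
    by (subst inv) (simp add: matrix_mul_assoc perp_mult_orth_proj[OF W])
  finally have BA: "?B ** ?A = 0"
    using psd_mult_eq_0_if_trace psd_G_map psd_orth_proj orth_proj_perp g W by metis
  obtain V where V: "orth_proj V" and V_range: "\<And>y. V *v y \<in> range (\<lambda>x. ?A *v x)"
    and V_fix: "\<And>x. x \<in> range (\<lambda>x. ?A *v x) \<Longrightarrow> V *v x = x"
    using orth_proj_onto[OF csubspace_range] by blast
  have VA: "V ** ?A = ?A"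
    unfolding matrix_eq by (simp add: matrix_vector_mul_assoc[symmetric] V_fix)
  have BV: "?B ** V = 0"
    unfolding matrix_eq
  proof
    fix y
    obtain x where "V *v y = ?A *v x"
      using V_range[of y] by blast
    then show "(?B ** V) *v y = 0 *v y"
      by (simp add: matrix_vector_mul_assoc[symmetric] matrix_vector_mul_assoc BA)
  qed
  have "trace (\<gamma> ** kron W (perp V)) = trace (perp V ** ?A)"
    unfolding trace_G_map_mult[symmetric] by (rule trace_mul_sym)
  moreover have "trace (\<gamma> ** kron (perp W) V) = trace (?B ** V)"
    by (simp add: trace_G_map_mult)
  ultimately have "cross_traces_vanish \<gamma> W V"
    unfolding cross_traces_vanish_def using VA BV by (simp add: perp_mult_eq_0_iff[THEN iffD2])
  then show thesis
    using V that by blast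
qed

lemma invariant_corner_if_T_map_proj:
  assumes "psd \<gamma>" "orth_proj W" "T_map \<gamma> W = W ** T_map \<gamma> W ** W"
  shows "invariant_corner (F_map \<gamma> \<circ> G_map \<gamma>) W"
  using cross_traces_vanish_if_T_map_proj[OF assms] invariant_corner_if_cross_traces_vanish assms
  by metis

lemma invariant_complement_if_block_criterion:
  fixes \<gamma> :: "('a::finite \<times> 'b::finite) cmat"
  assumes g: "psd \<gamma>"
    and crit: "\<And>W V. orth_proj W \<Longrightarrow> orth_proj V \<Longrightarrow> cross_traces_vanish \<gamma> W V \<Longrightarrow> block_diagonal \<gamma> W V"
    and W: "orth_proj W" and inv: "invariant_corner (F_map \<gamma> \<circ> G_map \<gamma>) W"
  shows "invariant_corner (F_map \<gamma> \<circ> G_map \<gamma>) (perp W)" "T_map \<gamma> (W ** Z ** perp W) = 0"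
proof -
  obtain V where V: "orth_proj V" and a: "cross_traces_vanish \<gamma> W V"
    using cross_traces_vanish_if_T_map_proj[OF g W invariant_corner_proj[OF W inv, unfolded comp_apply]] .
  show "invariant_corner (F_map \<gamma> \<circ> G_map \<gamma>) (perp W)"
    using invariant_corner_if_cross_traces_vanish[OF g orth_proj_perp[OF W] orth_proj_perp[OF V]] a
    by (simp add: cross_traces_vanish_perp)
  show "T_map \<gamma> (W ** Z ** perp W) = 0"
    by (simp add: G_map_off_diagonal_if_block_diagonal[OF W crit[OF W V a]])
qed

lemma G_map_corner_eq_0_if_T_map_eq_0:
  fixes \<gamma> :: "('a::finite \<times> 'b::finite) cmat"
  assumes g: "psd \<gamma>" and P: "orth_proj P" and T: "T_map \<gamma> P = 0"
  shows "G_map \<gamma> (P ** M ** P) = 0"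
proof (rule zero_if_trace_mult_zero)
  fix Y :: "'b cmat"
  have "G_map \<gamma> P = 0"
    using G_map_eq_0_if_T_map_eq_0[OF psd_hermitian[OF g] T] .
  then have "trace (\<gamma> ** kron P (mat 1)) = 0"
    using trace_G_map_mult[of \<gamma> P "mat 1"] by simp
  then have "\<gamma> ** kron P (mat 1) = 0"
    using psd_mult_orth_proj_eq_0[OF g orth_proj_kron[OF P orth_proj_1]] by blast
  then show "trace (G_map \<gamma> (P ** M ** P) ** Y) = 0"
    using trace_mult_kron_eq_0(1)[OF psd_hermitian[OF g] P orth_proj_1, of "M ** P" Y]
    by (simp add: trace_G_map_mult matrix_mul_assoc)
qed

subsection \<open>Completely reducible states\<close>

definition orthogonal_projs :: "'n::finite cmat list \<Rightarrow> bool" where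
  "orthogonal_projs Ws \<longleftrightarrow> (\<forall>i<length Ws. orth_proj (Ws ! i)) \<and>
     (\<forall>i<length Ws. \<forall>j<length Ws. i \<noteq> j \<longrightarrow> Ws ! i ** Ws ! j = 0)"

locale irreducible_blocks =
  fixes \<gamma> :: "('a::finite \<times> 'b::finite) cmat" and Ws :: "'a cmat list"
  assumes psd: "psd \<gamma>"
    and orthogonal: "orthogonal_projs Ws"
    and invariant: "i < length Ws \<Longrightarrow> invariant_corner (F_map \<gamma> \<circ> G_map \<gamma>) (Ws ! i)"
    and irreducible: "i < length Ws \<Longrightarrow> irreducible_on (F_map \<gamma> \<circ> G_map \<gamma>) (Ws ! i)"
    and remainder: "\<forall>i<length Ws. \<forall>Y\<in>corner (Ws ! i) (Ws ! i). tinner X Y = 0 \<Longrightarrow> T_map \<gamma> X = 0"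

lemma completely_reducible_iff_irreducible_blocks:
  assumes "psd \<gamma>"
  shows "completely_reducible (F_map \<gamma> \<circ> G_map \<gamma>) \<longleftrightarrow> (\<exists>Ws. irreducible_blocks \<gamma> Ws)"
  using assms selfadjoint_map_T[OF psd_hermitian[OF assms]] positive_map_T[OF assms]
  unfolding completely_reducible_def irreducible_blocks_def orthogonal_projs_def by auto

context irreducible_blocks
begin

lemma block_orth_proj: "i < length Ws \<Longrightarrow> orth_proj (Ws ! i)"
  and blocks_orthogonal: "i < length Ws \<Longrightarrow> j < length Ws \<Longrightarrow> i \<noteq> j \<Longrightarrow> Ws ! i ** Ws ! j = 0"
  using orthogonal by (auto simp: orthogonal_projs_def)

lemma T_map_eq_sum_blocks: "T_map \<gamma> Z = (\<Sum>i<length Ws. T_map \<gamma> (Ws ! i ** Z ** Ws ! i))"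
proof -
  let ?D = "Z - (\<Sum>i<length Ws. Ws ! i ** Z ** Ws ! i)"
  have "tinner ?D Y = 0" if j: "j < length Ws" and Y: "Y \<in> corner (Ws ! j) (Ws ! j)" for j Y
  proof -
    let ?W = "Ws ! j"
    have W: "orth_proj ?W"
      using block_orth_proj[OF j] .
    have CY: "cadj Y = ?W ** cadj Y ** ?W"
      using arg_cong[OF Y[unfolded corner_iff[OF W]], of cadj] orth_proj_cadj[OF W]
      by (simp add: cadj_mult matrix_mul_assoc)
    have "trace ((Ws ! i ** Z ** Ws ! i) ** cadj Y) = (if i = j then trace (Z ** cadj Y) else 0)"
      if i: "i < length Ws" for i
    proof (cases "i = j")
      case True
      have "trace ((?W ** Z ** ?W) ** cadj Y) = trace (Z ** (?W ** cadj Y ** ?W))"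
        by (metis matrix_mul_assoc trace_mul_sym)
      then show ?thesis
        using True CY by simp
    next
      case False
      have "(Ws ! i ** Z ** Ws ! i) ** cadj Y = (Ws ! i ** Z) ** (Ws ! i ** ?W) ** cadj Y ** ?W"
        by (subst CY) (simp add: matrix_mul_assoc)
      then show ?thesis
        using False blocks_orthogonal[OF i j] by simp
    qed
    then have "(\<Sum>i<length Ws. trace ((Ws ! i ** Z ** Ws ! i) ** cadj Y)) = trace (Z ** cadj Y)"
      using j by (simp add: sum.delta)
    then show ?thesis
      by (simp add: tinner_def matrix_diff_rdistrib trace_sub matrix_sum_rdistrib trace_sum)
  qed
  then have "T_map \<gamma> ?D = 0"
    using remainder by blast
  then show ?thesis
    by (simp add: G_map_diff F_map_diff G_map_sum F_map_sum)
qed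

lemma psd_T_map_block: "orth_proj U \<Longrightarrow> i < length Ws \<Longrightarrow> psd (T_map \<gamma> (Ws ! i ** U ** Ws ! i))"
  by (simp add: psd_T_map psd psd_sandwich psd_orth_proj block_orth_proj)

text \<open>T U is the sum of the positive matrices T (W_i U W_i), so each of them
  inherits the support of T U.\<close>

lemma T_map_block_compress:
  assumes U: "orth_proj U" "T_map \<gamma> U = U ** T_map \<gamma> U ** U" and i: "i < length Ws"
  shows "T_map \<gamma> (Ws ! i ** U ** Ws ! i) = U ** T_map \<gamma> (Ws ! i ** U ** Ws ! i) ** U"
proof -
  let ?B = "\<lambda>j. T_map \<gamma> (Ws ! j ** U ** Ws ! j)"
  have "T_map \<gamma> U = ?B i + (\<Sum>j\<in>{..<length Ws} - {i}. ?B j)"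
    unfolding T_map_eq_sum_blocks[of U] using i by (simp add: sum.remove)
  moreover have "psd (\<Sum>j\<in>{..<length Ws} - {i}. ?B j)"
    by (rule psd_sum) (auto intro: psd_T_map_block U(1))
  ultimately have "psd (T_map \<gamma> U - ?B i)"
    by simp
  moreover have "T_map \<gamma> U ** perp U = 0"
    by (subst U(2)) (simp add: orth_proj_mult_perp[OF U(1)] flip: matrix_mul_assoc)
  ultimately have "?B i ** perp U = 0"
    by (rule psd_mult_eq_0_mono[OF psd_T_map_block[OF U(1) i]])
  then show ?thesis
    by (rule hermitian_eq_sandwich[OF psd_hermitian[OF psd_T_map_block[OF U(1) i]] U(1)])
qed

text \<open>The meet P of U and the block W_i satisfies T P \<le> T (W_i U W_i), which is supported
  on P; hence the corner of P is invariant and irreducibility forces P = 0 or P = W_i.\<close>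

lemma block_alternative:
  assumes U: "orth_proj U" "T_map \<gamma> U = U ** T_map \<gamma> U ** U" and i: "i < length Ws"
  shows "U ** Ws ! i = Ws ! i \<or> T_map \<gamma> (Ws ! i ** U ** Ws ! i) = 0"
proof -
  let ?W = "Ws ! i"
  let ?A = "T_map \<gamma> (?W ** U ** ?W)"
  have W: "orth_proj ?W"
    by (rule block_orth_proj[OF i])
  obtain P where P: "orth_proj P" "U ** P = P" "?W ** P = P"
    and P_fix: "\<And>x. U *v x = x \<Longrightarrow> ?W *v x = x \<Longrightarrow> P *v x = x"
    using orth_proj_meet[OF U(1) W] by blast
  have psdA: "psd ?A"
    by (rule psd_T_map_block[OF U(1) i])
  have "U ** ?A = ?A"
    by (rule orth_proj_absorb_sandwich[OF U(1) T_map_block_compress[OF U i]])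
  moreover have "?W ** ?A = ?A"
    using orth_proj_absorb_sandwich[OF W] invariant_cornerD[OF W invariant[OF i]] by simp
  ultimately have PA: "P ** ?A = ?A"
    unfolding matrix_eq by (metis P_fix matrix_vector_mul_assoc)
  then have "?A ** perp P = 0"
    using hermitian_absorb_commute[OF orth_proj_hermitian[OF P(1)] psd_hermitian[OF psdA]]
    by (simp add: mult_perp_eq_0_iff)
  moreover have "psd (?A - T_map \<gamma> P)"
    using psd_T_map[OF psd psd_compression_minus_meet[OF U(1) W P]]
    by (simp add: G_map_diff F_map_diff)
  ultimately have "T_map \<gamma> P ** perp P = 0"
    by (intro psd_mult_eq_0_mono[OF psd_T_map[OF psd psd_orth_proj[OF P(1)]]])
  then have "T_map \<gamma> P = P ** T_map \<gamma> P ** P"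
    using hermitian_eq_sandwich psd_hermitian psd_T_map psd psd_orth_proj P(1) by blast
  then have "invariant_corner (F_map \<gamma> \<circ> G_map \<gamma>) P"
    by (rule invariant_corner_if_T_map_proj[OF psd P(1)])
  moreover have "corner P P \<subseteq> corner ?W ?W"
    using P(3) orth_proj_absorb_commute[OF W P(1) P(3)] unfolding corner_def
    by (auto simp: matrix_mul_assoc) (metis matrix_mul_assoc)
  ultimately have "P = 0 \<or> P = ?W"
    using irreducible[OF i] P(1) unfolding irreducible_on_def invariant_corner_def by blast
  then show ?thesis
    using PA P(2) by auto
qed

lemma T_map_off_diagonal_eq_0:
  assumes W: "orth_proj W" and inv: "invariant_corner (F_map \<gamma> \<circ> G_map \<gamma>) W"
    "invariant_corner (F_map \<gamma> \<circ> G_map \<gamma>) (perp W)"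
  shows "T_map \<gamma> (W ** Z ** perp W) = 0"
proof -
  have "T_map \<gamma> (Ws ! i ** (W ** Z ** perp W) ** Ws ! i) = 0" if i: "i < length Ws" for i
  proof -
    let ?V = "Ws ! i"
    have V: "orth_proj ?V"
      by (rule block_orth_proj[OF i])
    have W': "orth_proj (perp W)"
      using W by (rule orth_proj_perp)
    consider "W ** ?V = ?V" | "perp W ** ?V = ?V"
      | "T_map \<gamma> (?V ** W ** ?V) = 0" "T_map \<gamma> (?V ** perp W ** ?V) = 0"
      using block_alternative[OF W invariant_corner_proj[OF W inv(1), unfolded comp_apply] i]
        block_alternative[OF W' invariant_corner_proj[OF W' inv(2), unfolded comp_apply] i] by blast
    then show ?thesis
    proof cases
      case 1
      then have "perp W ** ?V = 0"
        by (simp add: perp_mult_eq_0_iff)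
      then show ?thesis
        by (simp flip: matrix_mul_assoc)
    next
      case 2
      then have "W ** ?V = 0"
        by (metis matrix_mul_assoc orth_proj_mult_perp[OF W] times0_left)
      then have "?V ** W = 0"
        by (rule hermitian_mult_eq_0_commute[OF orth_proj_hermitian[OF W] orth_proj_hermitian[OF V]])
      then show ?thesis
        by (simp add: matrix_mul_assoc)
    next
      case 3
      have "?V ** W ** ?V + ?V ** perp W ** ?V = ?V"
        by (simp only: add_perp matrix_mul_rid orth_proj_idem[OF V]
            flip: matrix_add_rdistrib matrix_add_ldistrib)
      then have "T_map \<gamma> ?V = 0"
        using 3 by (metis G_map_add F_map_add add_0)
      then show ?thesis
        using G_map_corner_eq_0_if_T_map_eq_0[OF psd V] by simp
    qed
  qed
  then show ?thesis
    by (subst T_map_eq_sum_blocks) simp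
qed

lemma block_diagonal_if_cross_traces_vanish:
  assumes W: "orth_proj W" and V: "orth_proj V" and a: "cross_traces_vanish \<gamma> W V"
  shows "block_diagonal \<gamma> W V"
proof -
  have W': "orth_proj (perp W)"
    using W by (rule orth_proj_perp)
  have inv: "invariant_corner (F_map \<gamma> \<circ> G_map \<gamma>) W" "invariant_corner (F_map \<gamma> \<circ> G_map \<gamma>) (perp W)"
    using invariant_corner_if_cross_traces_vanish[OF psd W V a]
      invariant_corner_if_cross_traces_vanish[OF psd W' orth_proj_perp[OF V]] a
    by (simp_all add: cross_traces_vanish_perp)
  have "G_map \<gamma> (W ** Z ** perp W) = 0" "G_map \<gamma> (perp W ** Z ** W) = 0" for Z
    using T_map_off_diagonal_eq_0[OF W inv, of Z] T_map_off_diagonal_eq_0[OF W' inv(2), of Z] inv(1)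
    by (simp_all add: G_map_eq_0_if_T_map_eq_0[OF psd_hermitian[OF psd]])
  then show ?thesis
    using block_diagonal_if_off_diagonal_vanish[OF psd_hermitian[OF psd] W V]
      a cross_traces_vanish_iff[OF psd W V] by blast
qed

end

subsection \<open>Decomposing into irreducible corners\<close>

lemma orth_proj_mult_commute:
  assumes "orth_proj P" "orth_proj Q" "P ** Q = Q ** P"
  shows "orth_proj (P ** Q)"
  using assms unfolding orth_proj_def
  by (metis cadj_mult matrix_mul_assoc)

lemma invariant_corner_mult:
  assumes P: "orth_proj P" and Q: "orth_proj Q" and PQ: "P ** Q = Q ** P"
    and inv: "invariant_corner T P" "invariant_corner T Q"
  shows "invariant_corner T (P ** Q)"
  unfolding invariant_corner_iff[OF orth_proj_mult_commute[OF P Q PQ]]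
proof
  fix Z
  let ?X = "T (P ** Q ** Z ** (P ** Q))"
  have "P ** Q ** Z ** (P ** Q) = P ** (Q ** Z ** Q) ** P"
    by (metis PQ matrix_mul_assoc)
  then have XP: "?X = P ** ?X ** P"
    using invariant_cornerD[OF P inv(1)] by metis
  have "P ** Q ** Z ** (P ** Q) = Q ** (P ** Z ** P) ** Q"
    by (metis PQ matrix_mul_assoc)
  then have XQ: "?X = Q ** ?X ** Q"
    using invariant_cornerD[OF Q inv(2)] by metis
  show "?X = P ** Q ** ?X ** (P ** Q)"
    by (metis XP XQ PQ matrix_mul_assoc)
qed

lemma dim_fixed_space_less:
  fixes P Q :: "'n::finite cmat"
  assumes P: "orth_proj P" and Q: "orth_proj Q" and QP: "Q ** P = P" and ne: "P \<noteq> Q"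
  shows "dim {x. P *v x = x} < dim {x. Q *v x = x}"
proof -
  have sub: "subspace {x. P *v x = x}" "subspace {x. Q *v x = x}"
    using csubspace_subspace csubspace_common_fixed[of P P] csubspace_common_fixed[of Q Q] by simp_all
  have "{x. P *v x = x} \<subseteq> {x. Q *v x = x}"
    using QP by (metis (mono_tags, lifting) Collect_mono matrix_vector_mul_assoc)
  moreover have "{x. P *v x = x} \<noteq> {x. Q *v x = x}"
  proof
    assume eq: "{x. P *v x = x} = {x. Q *v x = x}"
    have "Q *v (Q *v y) = Q *v y" for y
      by (simp add: matrix_vector_mul_assoc orth_proj_idem[OF Q])
    then have "P ** Q = Q"
      using eq unfolding matrix_eq by (auto simp: matrix_vector_mul_assoc[symmetric])
    then show False
      using ne orth_proj_absorb_commute[OF Q P QP] orth_proj_absorb_commute[OF P Q] by metis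
  qed
  ultimately have "span {x. P *v x = x} \<subset> span {x. Q *v x = x}"
    unfolding span_eq_iff[THEN iffD2, OF sub(1)] span_eq_iff[THEN iffD2, OF sub(2)] by blast
  then show ?thesis
    by (rule dim_psubset)
qed

lemma orthogonal_projs_mult_sum_list:
  assumes "orthogonal_projs Ws" "i < length Ws"
  shows "Ws ! i ** sum_list Ws = Ws ! i" "sum_list Ws ** Ws ! i = Ws ! i"
proof -
  have proj: "orth_proj (Ws ! i)"
    and orth: "\<And>j. j < length Ws \<Longrightarrow> j \<noteq> i \<Longrightarrow> Ws ! i ** Ws ! j = 0 \<and> Ws ! j ** Ws ! i = 0"
    using assms unfolding orthogonal_projs_def by auto
  have sum: "sum_list Ws = (\<Sum>j<length Ws. Ws ! j)"
    by (simp add: sum_list_sum_nth atLeast0LessThan)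
  have "Ws ! i ** sum_list Ws = (\<Sum>j<length Ws. if j = i then Ws ! i else 0)"
    unfolding sum matrix_sum_ldistrib[OF finite_lessThan]
    using orth orth_proj_idem[OF proj] by (intro sum.cong) auto
  then show "Ws ! i ** sum_list Ws = Ws ! i"
    using assms(2) by simp
  have "sum_list Ws ** Ws ! i = (\<Sum>j<length Ws. if j = i then Ws ! i else 0)"
    unfolding sum matrix_sum_rdistrib[OF finite_lessThan]
    using orth orth_proj_idem[OF proj] by (intro sum.cong) auto
  then show "sum_list Ws ** Ws ! i = Ws ! i"
    using assms(2) by simp
qed

lemma orthogonal_projs_append:
  assumes A: "orthogonal_projs As" and B: "orthogonal_projs Bs"
    and AB: "sum_list As ** sum_list Bs = 0"
  shows "orthogonal_projs (As @ Bs)"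
proof -
  have cross: "As ! i ** Bs ! j = 0 \<and> Bs ! j ** As ! i = 0"
    if i: "i < length As" and j: "j < length Bs" for i j
  proof -
    have "As ! i ** Bs ! j = As ! i ** (sum_list As ** sum_list Bs) ** Bs ! j"
      using orthogonal_projs_mult_sum_list[OF A i] orthogonal_projs_mult_sum_list[OF B j]
      by (metis matrix_mul_assoc)
    then have "As ! i ** Bs ! j = 0"
      using AB by simp
    moreover have "hermitian (As ! i)" "hermitian (Bs ! j)"
      using A B i j by (simp_all add: orthogonal_projs_def orth_proj_hermitian)
    ultimately show ?thesis
      using hermitian_mult_eq_0_commute by blast
  qed
  show ?thesis
    using A B unfolding orthogonal_projs_def
  proof (intro conjI allI impI; elim conjE)
    fix i j
    assume "i < length (As @ Bs)" "j < length (As @ Bs)" "i \<noteq> j"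
      and "\<forall>i<length As. \<forall>j<length As. i \<noteq> j \<longrightarrow> As ! i ** As ! j = 0"
      and "\<forall>i<length Bs. \<forall>j<length Bs. i \<noteq> j \<longrightarrow> Bs ! i ** Bs ! j = 0"
    then show "(As @ Bs) ! i ** (As @ Bs) ! j = 0"
      using cross by (cases "i < length As"; cases "j < length As") (auto simp: nth_append)
  qed (auto simp: nth_append)
qed

text \<open>Induction on the dimension of the range: a reducible invariant corner U splits into
  an invariant sub-corner W and the invariant corner of U - W.\<close>

lemma irreducible_decomposition:
  fixes T :: "'n::finite cmat \<Rightarrow> 'n cmat"
  assumes compl: "\<And>W. orth_proj W \<Longrightarrow> invariant_corner T W \<Longrightarrow> invariant_corner T (perp W)"
  shows "orth_proj U \<Longrightarrow> invariant_corner T U \<Longrightarrow>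
    \<exists>Ws. orthogonal_projs Ws \<and> sum_list Ws = U \<and> (\<forall>W\<in>set Ws. invariant_corner T W \<and> irreducible_on T W)"
proof (induct "dim {x. U *v x = x}" arbitrary: U rule: less_induct)
  case less
  note U = less.prems(1) and invU = less.prems(2)
  show ?case
  proof (cases "irreducible_on T U")
    case True
    then show ?thesis
      using U invU by (intro exI[of _ "[U]"]) (simp add: orthogonal_projs_def)
  next
    case False
    then obtain W where W: "orth_proj W" and sub: "corner W W \<subseteq> corner U U"
      and invW: "invariant_corner T W" and W0: "W \<noteq> 0" and WU: "W \<noteq> U"
      unfolding irreducible_on_def invariant_corner_def by blast
    have "W \<in> corner U U"
      using sub corner_iff[OF W] orth_proj_idem[OF W] by (metis matrix_mul_assoc subsetD)
    then have UW: "U ** W = W"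
      using orth_proj_absorb_sandwich[OF U] corner_iff[OF U] by blast
    have comm: "U ** perp W = perp W ** U"
      using orth_proj_absorb_commute[OF U W UW] UW by (simp add: perp_def matrix_diff_ldistrib matrix_diff_rdistrib)
    define R where "R = U ** perp W"
    have R: "orth_proj R"
      unfolding R_def by (rule orth_proj_mult_commute[OF U orth_proj_perp[OF W] comm])
    have invR: "invariant_corner T R"
      unfolding R_def by (rule invariant_corner_mult[OF U orth_proj_perp[OF W] comm invU compl[OF W invW]])
    have UR: "U ** R = R"
      unfolding R_def by (simp add: matrix_mul_assoc orth_proj_idem[OF U])
    have WR: "W + R = U"
      unfolding R_def perp_def by (simp add: matrix_diff_ldistrib UW)
    have "R \<noteq> U"
      using WR W0 by auto
    then obtain Ws1 Ws2 where
      Ws1: "orthogonal_projs Ws1" "sum_list Ws1 = W" "\<forall>V\<in>set Ws1. invariant_corner T V \<and> irreducible_on T V" and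
      Ws2: "orthogonal_projs Ws2" "sum_list Ws2 = R" "\<forall>V\<in>set Ws2. invariant_corner T V \<and> irreducible_on T V"
      using less.hyps[OF dim_fixed_space_less[OF W U UW WU] W invW]
        less.hyps[OF dim_fixed_space_less[OF R U UR] R invR] by blast
    have "sum_list Ws1 ** sum_list Ws2 = 0"
      unfolding Ws1(2) Ws2(2) R_def
      by (simp add: matrix_mul_assoc orth_proj_absorb_commute[OF U W UW] orth_proj_mult_perp[OF W])
    then show ?thesis
      using Ws1 Ws2 WR by (intro exI[of _ "Ws1 @ Ws2"]) (auto intro: orthogonal_projs_append)
  qed
qed

lemma compression_eq_0_if_tinner:
  assumes W: "orth_proj W" and t: "tinner X (W ** X ** W) = 0"
  shows "W ** X ** W = 0"
proof -
  have WW: "A ** W ** W = A ** W" for A :: "'a::finite cmat"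
    by (metis matrix_mul_assoc orth_proj_idem[OF W])
  have adj: "cadj (W ** X ** W) = W ** cadj X ** W"
    using orth_proj_cadj[OF W] by (simp add: cadj_mult matrix_mul_assoc)
  have "tinner (W ** X ** W) (W ** X ** W) = trace (W ** (X ** (W ** cadj X ** W)))"
    unfolding tinner_def adj by (simp add: matrix_mul_assoc WW)
  also have "\<dots> = trace ((X ** (W ** cadj X ** W)) ** W)"
    by (rule trace_mul_sym)
  also have "\<dots> = tinner X (W ** X ** W)"
    unfolding tinner_def adj by (simp add: matrix_mul_assoc WW)
  finally show ?thesis
    using t tinner_self_eq_0 by simp
qed

text \<open>With a block decomposition of the identity, every X orthogonal to all diagonal
  corners is a sum of off-diagonal blocks W_i X W_j, and these are killed by T.\<close>

lemma remainder_vanishes_if_off_diagonal_vanish: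
  fixes T :: "'n::finite cmat \<Rightarrow> 'n cmat"
  assumes lin: "\<And>X Y. T (X + Y) = T X + T Y" and T0: "T 0 = 0"
    and off: "\<And>W Z. orth_proj W \<Longrightarrow> invariant_corner T W \<Longrightarrow> T (W ** Z ** perp W) = 0"
    and Ws: "orthogonal_projs Ws" "sum_list Ws = mat 1" "\<forall>W\<in>set Ws. invariant_corner T W"
    and X: "\<forall>i<length Ws. \<forall>Y\<in>corner (Ws ! i) (Ws ! i). tinner X Y = 0"
  shows "T X = 0"
proof -
  let ?n = "length Ws"
  have T_sum: "T (\<Sum>i\<in>I. A i) = (\<Sum>i\<in>I. T (A i))" if "finite I" for I and A :: "_ \<Rightarrow> 'n cmat"
    using that by (induct I rule: finite_induct) (simp_all add: lin T0)
  have proj: "orth_proj (Ws ! i)" if "i < ?n" for i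
    using Ws(1) that by (simp add: orthogonal_projs_def)
  have "X = sum_list Ws ** X ** sum_list Ws"
    using Ws(2) by simp
  also have "\<dots> = (\<Sum>i<?n. \<Sum>j<?n. Ws ! i ** X ** Ws ! j)"
    by (simp add: sum_list_sum_nth atLeast0LessThan matrix_sum_rdistrib matrix_sum_ldistrib)
      (rule sum.swap)
  finally have X_blocks: "X = (\<Sum>i<?n. \<Sum>j<?n. Ws ! i ** X ** Ws ! j)" .
  have "T (Ws ! i ** X ** Ws ! j) = 0" if i: "i < ?n" and j: "j < ?n" for i j
  proof (cases "i = j")
    case True
    have "tinner X (Ws ! i ** X ** Ws ! i) = 0"
      using X i by (auto simp: corner_def)
    then have "Ws ! i ** X ** Ws ! i = 0"
      by (rule compression_eq_0_if_tinner[OF proj[OF i]])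
    then show ?thesis
      using True T0 by simp
  next
    case False
    have "Ws ! j ** Ws ! i = 0"
      using Ws(1) i j False by (simp add: orthogonal_projs_def)
    then have "Ws ! j ** perp (Ws ! i) = Ws ! j"
      by (simp add: perp_def matrix_diff_ldistrib)
    then have "Ws ! i ** X ** Ws ! j = Ws ! i ** (X ** Ws ! j) ** perp (Ws ! i)"
      by (metis matrix_mul_assoc)
    then show ?thesis
      using off proj[OF i] Ws(3) i by (metis nth_mem)
  qed
  then show ?thesis
    by (subst X_blocks) (simp add: T_sum)
qed

lemma completely_reducible_if_block_criterion:
  fixes \<gamma> :: "('a::finite \<times> 'b::finite) cmat"
  assumes g: "psd \<gamma>"
    and crit: "\<And>W V. orth_proj W \<Longrightarrow> orth_proj V \<Longrightarrow> cross_traces_vanish \<gamma> W V \<Longrightarrow> block_diagonal \<gamma> W V"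
  shows "completely_reducible (F_map \<gamma> \<circ> G_map \<gamma>)"
proof -
  note complement = invariant_complement_if_block_criterion[OF g crit]
  have "invariant_corner (F_map \<gamma> \<circ> G_map \<gamma>) (mat 1)"
    by (simp add: invariant_corner_iff)
  then obtain Ws where Ws: "orthogonal_projs Ws" "sum_list Ws = mat 1"
    "\<forall>W\<in>set Ws. invariant_corner (F_map \<gamma> \<circ> G_map \<gamma>) W \<and> irreducible_on (F_map \<gamma> \<circ> G_map \<gamma>) W"
    using irreducible_decomposition[OF complement(1) orth_proj_1] by blast
  have "T_map \<gamma> X = 0" if "\<forall>i<length Ws. \<forall>Y\<in>corner (Ws ! i) (Ws ! i). tinner X Y = 0" for X
    using remainder_vanishes_if_off_diagonal_vanish[of "F_map \<gamma> \<circ> G_map \<gamma>", OF _ _ _ Ws(1,2) _ that]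
      complement(2) Ws(3) by (simp add: G_map_add F_map_add)
  then have "irreducible_blocks \<gamma> Ws"
    using g Ws by unfold_locales (auto simp: all_set_conv_all_nth)
  then show ?thesis
    using completely_reducible_iff_irreducible_blocks[OF g] by blast
qed

lemma completely_reducible_iff_block_criterion:
  assumes g: "psd \<gamma>"
  shows "completely_reducible (F_map \<gamma> \<circ> G_map \<gamma>) \<longleftrightarrow>
    (\<forall>W V. orth_proj W \<and> orth_proj V \<longrightarrow> (cross_traces_vanish \<gamma> W V \<longleftrightarrow> block_diagonal \<gamma> W V))"
proof
  assume "completely_reducible (F_map \<gamma> \<circ> G_map \<gamma>)"
  then obtain Ws where "irreducible_blocks \<gamma> Ws"
    using completely_reducible_iff_irreducible_blocks[OF g] by blast
  then show "\<forall>W V. orth_proj W \<and> orth_proj V \<longrightarrow> (cross_traces_vanish \<gamma> W V \<longleftrightarrow> block_diagonal \<gamma> W V)"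
    using irreducible_blocks.block_diagonal_if_cross_traces_vanish cross_traces_vanish_if_block_diagonal
    by blast
qed (use completely_reducible_if_block_criterion[OF g] in blast)

theorem mainTheorem5:
  fixes \<gamma> :: "('k::finite \<times> 'm::finite) cmat"
  assumes "is_state \<gamma>"
  shows "\<gamma> \<in> CR \<longleftrightarrow>
    (\<forall>(W::'k cmat) (V::'m cmat). orth_proj W \<and> orth_proj V \<longrightarrow>
       ((trace (\<gamma> ** kron W (perp V)) = 0 \<and> trace (\<gamma> ** kron (perp W) V) = 0)
        \<longleftrightarrow>
        \<gamma> = kron W V ** \<gamma> ** kron W V + kron (perp W) (perp V) ** \<gamma> ** kron (perp W) (perp V)))"
  using completely_reducible_iff_block_criterion[of \<gamma>] assms
  unfolding CR_def is_state_def cross_traces_vanish_def block_diagonal_def by simp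

end
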